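(* Let $E$ be an arbitrary graph, $X\subseteq{\rm Reg}(E)$, $Y={\rm Reg}(E)\setminus X$, and let $\alpha$ be a nonzero homogeneous element of $C_K^X(E)$ (with respect to its $\mathbb Z$-grading). Then there exist $\mu,\eta\in{\rm Path}(E)$ such that either $0\ne\mu^*\alpha\eta=ku$ for some $k\in K\setminus\{0\}$ and $u\in E^0$, or $0\neq\mu^*\alpha\eta=k\big(v-\sum_{e\in s^{-1}(v)}ee^*\big)$ for some $k\in K\setminus\{0\}$ and $v\in Y$. In particular, every nonzero graded ideal of $C_K^X(E)$ contains a vertex or an element of the form $v-\sum_{e\in s^{-1}(v)}ee^*$ with $v\in Y$.
   Context: Let $K$ be a field and $E=(E^0,E^1,r,s)$ a directed graph (no countability or finiteness assumptions). A vertex $v$ is regular if $s^{-1}(v)$ is finite and nonempty; ${\rm Reg}(E)$ is the set of regular vertices. A path of length $n\ge 1$ is a sequence $\xi_1\cdots\xi_n$ of edges with $r(\xi_i)=s(\xi_{i+1})$; vertices are paths of length $0$; ${\rm Path}(E)$ is the set of finite paths and $|\alpha|$ denotes length. For $X\subseteq{\rm Reg}(E)$, the relative Cohn path algebra $C_K^X(E)$ is the free $K$-algebra generated by $E^0\cup E^1\cup\{e^*:e\in E^1\}$ subject to: $vw=\delta_{v,w}v$; $s(e)e=er(e)=e$ and $r(e)e^*=e^*s(e)=e^*$; $e^*f=\delta_{e,f}r(e)$; $v=\sum_{e\in s^{-1}(v)}ee^*$ for every $v\in X$. For a path $\alpha=\alpha_1\cdots\alpha_n$, $\alpha^*=\alpha_n^*\cdots\alpha_1^*$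 and $v^*=v$. Every element of $C_K^X(E)$ is a finite sum $\sum k_i\alpha_i\beta_i^*$ with $\alpha_i,\beta_i$ paths, $r(\alpha_i)=r(\beta_i)$; $C_K^X(E)$ is $\mathbb Z$-graded with degree-$n$ component spanned by the $\alpha\beta^*$ with $|\alpha|-|\beta|=n$. *)

theory Defs
  imports Main
begin

text \<open>Generators of the free algebra: vertices, real edges and ghost edges.\<close>
datatype ('v, 'e) gen = V 'v | Ed 'e | Gh 'e

text \<open>Elements of the free (non-unital) K-algebra on a generator set G are
  finitely supported K-valued functions on nonempty words over G.\<close>
definition free_elem :: "'a set \<Rightarrow> ('a list \<Rightarrow> 'k::field) \<Rightarrow> bool" where
  "free_elem G f \<longleftrightarrow> finite {w. f w \<noteq> 0} \<and> (\<forall>w. f w \<noteq> 0 \<longrightarrow> w \<noteq> [] \<and> set w \<subseteq> G)"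

definition fadd :: "('a list \<Rightarrow> 'k::field) \<Rightarrow> ('a list \<Rightarrow> 'k) \<Rightarrow> ('a list \<Rightarrow> 'k)" where
  "fadd f g = (\<lambda>w. f w + g w)"

definition fsub :: "('a list \<Rightarrow> 'k::field) \<Rightarrow> ('a list \<Rightarrow> 'k) \<Rightarrow> ('a list \<Rightarrow> 'k)" where
  "fsub f g = (\<lambda>w. f w - g w)"

definition fzero :: "'a list \<Rightarrow> 'k::field" where
  "fzero = (\<lambda>w. 0)"

definition smul :: "'k::field \<Rightarrow> ('a list \<Rightarrow> 'k) \<Rightarrow> ('a list \<Rightarrow> 'k)" where
  "smul k f = (\<lambda>w. k * f w)"

definition fmul :: "('a list \<Rightarrow> 'k::field) \<Rightarrow> ('a list \<Rightarrow> 'k) \<Rightarrow> ('a list \<Rightarrow> 'k)" where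
  "fmul f g = (\<lambda>w. \<Sum>i\<in>{0..length w}. f (take i w) * g (drop i w))"

definition wmono :: "'a list \<Rightarrow> ('a list \<Rightarrow> 'k::field)" where
  "wmono u = (\<lambda>w. if w = u then 1 else 0)"

definition fsum :: "'b set \<Rightarrow> ('b \<Rightarrow> ('a list \<Rightarrow> 'k::field)) \<Rightarrow> ('a list \<Rightarrow> 'k)" where
  "fsum A F = (\<lambda>w. \<Sum>x\<in>A. F x w)"

inductive_set gen_ideal :: "'a set \<Rightarrow> ('a list \<Rightarrow> 'k::field) set \<Rightarrow> ('a list \<Rightarrow> 'k) set"
  for G R where
  gen: "r \<in> R \<Longrightarrow> set u \<subseteq> G \<Longrightarrow> set v \<subseteq> G \<Longrightarrow> fmul (fmul (wmono u) r) (wmono v) \<in> gen_ideal G R"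
| zero: "fzero \<in> gen_ideal G R"
| add: "a \<in> gen_ideal G R \<Longrightarrow> b \<in> gen_ideal G R \<Longrightarrow> fadd a b \<in> gen_ideal G R"
| smul: "a \<in> gen_ideal G R \<Longrightarrow> smul k a \<in> gen_ideal G R"

definition alg_ideal :: "'a set \<Rightarrow> ('a list \<Rightarrow> 'k::field) set \<Rightarrow> bool" where
  "alg_ideal G J \<longleftrightarrow> J \<subseteq> {f. free_elem G f} \<and> fzero \<in> J
     \<and> (\<forall>a\<in>J. \<forall>b\<in>J. fadd a b \<in> J) \<and> (\<forall>a\<in>J. \<forall>k. smul k a \<in> J)
     \<and> (\<forall>a\<in>J. \<forall>x. free_elem G x \<longrightarrow> fmul x a \<in> J \<and> fmul a x \<in> J)"

definition gens :: "'v set \<Rightarrow> 'e set \<Rightarrow> ('v, 'e) gen set" where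
  "gens E0 E1 = V ` E0 \<union> Ed ` E1 \<union> Gh ` E1"

definition is_graph :: "'v set \<Rightarrow> 'e set \<Rightarrow> ('e \<Rightarrow> 'v) \<Rightarrow> ('e \<Rightarrow> 'v) \<Rightarrow> bool" where
  "is_graph E0 E1 r s \<longleftrightarrow> (\<forall>e\<in>E1. r e \<in> E0 \<and> s e \<in> E0)"

definition Reg :: "'v set \<Rightarrow> 'e set \<Rightarrow> ('e \<Rightarrow> 'v) \<Rightarrow> 'v set" where
  "Reg E0 E1 s = {v\<in>E0. finite {e\<in>E1. s e = v} \<and> {e\<in>E1. s e = v} \<noteq> {}}"

definition is_path :: "'v set \<Rightarrow> 'e set \<Rightarrow> ('e \<Rightarrow> 'v) \<Rightarrow> ('e \<Rightarrow> 'v) \<Rightarrow> 'v + 'e list \<Rightarrow> bool" where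
  "is_path E0 E1 r s p = (case p of
      Inl u \<Rightarrow> u \<in> E0
    | Inr es \<Rightarrow> es \<noteq> [] \<and> set es \<subseteq> E1 \<and>
                (\<forall>i. Suc i < length es \<longrightarrow> r (es ! i) = s (es ! Suc i)))"

definition pth :: "'v + 'e list \<Rightarrow> (('v, 'e) gen list \<Rightarrow> 'k::field)" where
  "pth p = (case p of Inl u \<Rightarrow> wmono [V u] | Inr es \<Rightarrow> wmono (map Ed es))"

definition pth_star :: "'v + 'e list \<Rightarrow> (('v, 'e) gen list \<Rightarrow> 'k::field)" where
  "pth_star p = (case p of Inl u \<Rightarrow> wmono [V u] | Inr es \<Rightarrow> wmono (rev (map Gh es)))"

definition gap :: "'e set \<Rightarrow> ('e \<Rightarrow> 'v) \<Rightarrow> 'v \<Rightarrow> (('v, 'e) gen list \<Rightarrow> 'k::field)" where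
  "gap E1 s v = fsub (wmono [V v]) (fsum {e\<in>E1. s e = v} (\<lambda>e. wmono [Ed e, Gh e]))"

definition cohn_rels :: "'v set \<Rightarrow> 'e set \<Rightarrow> ('e \<Rightarrow> 'v) \<Rightarrow> ('e \<Rightarrow> 'v) \<Rightarrow> 'v set
     \<Rightarrow> (('v, 'e) gen list \<Rightarrow> 'k::field) set" where
  "cohn_rels E0 E1 r s X =
      {fsub (wmono [V v, V w]) (if v = w then wmono [V v] else fzero) | v w. v \<in> E0 \<and> w \<in> E0}
    \<union> {fsub (wmono [V (s e), Ed e]) (wmono [Ed e]) | e. e \<in> E1}
    \<union> {fsub (wmono [Ed e, V (r e)]) (wmono [Ed e]) | e. e \<in> E1}
    \<union> {fsub (wmono [V (r e), Gh e]) (wmono [Gh e]) | e. e \<in> E1}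
    \<union> {fsub (wmono [Gh e, V (s e)]) (wmono [Gh e]) | e. e \<in> E1}
    \<union> {fsub (wmono [Gh e, Ed f]) (if e = f then wmono [V (r e)] else fzero) | e f. e \<in> E1 \<and> f \<in> E1}
    \<union> {gap E1 s v | v. v \<in> X}"

text \<open>The kernel of the quotient map from the free algebra onto C^X_K(E):
  two free elements represent the same element of C^X_K(E) iff their difference lies here.\<close>
definition cohn_ideal :: "'v set \<Rightarrow> 'e set \<Rightarrow> ('e \<Rightarrow> 'v) \<Rightarrow> ('e \<Rightarrow> 'v) \<Rightarrow> 'v set
     \<Rightarrow> (('v, 'e) gen list \<Rightarrow> 'k::field) set" where
  "cohn_ideal E0 E1 r s X = gen_ideal (gens E0 E1) (cohn_rels E0 E1 r s X)"

fun gdeg :: "('v, 'e) gen \<Rightarrow> int" where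
  "gdeg (V _) = 0" | "gdeg (Ed _) = 1" | "gdeg (Gh _) = -1"

definition wdeg :: "('v, 'e) gen list \<Rightarrow> int" where
  "wdeg w = sum_list (map gdeg w)"

definition homog :: "int \<Rightarrow> (('v, 'e) gen list \<Rightarrow> 'k::field) \<Rightarrow> bool" where
  "homog n f \<longleftrightarrow> (\<forall>w. f w \<noteq> 0 \<longrightarrow> wdeg w = n)"

definition hcomp :: "int \<Rightarrow> (('v, 'e) gen list \<Rightarrow> 'k::field) \<Rightarrow> (('v, 'e) gen list \<Rightarrow> 'k)" where
  "hcomp n f = (\<lambda>w. if wdeg w = n then f w else 0)"

end

theory Submission
  imports Defs "HOL-Library.Function_Algebras"
begin

text \<open>Modulo the relations, every homogeneous element is a combination of vertices and normal
  monomials \<open>\<alpha>\<beta>\<^sup>*\<close> with \<open>r \<alpha> = r \<beta>\<close>. Cutting it down by vertices on both sides, all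
  monomials start at a fixed pair of vertices. If every \<open>\<alpha>\<close> is a proper path, the ghost \<open>e\<^sup>*\<close> of
  a suitable first edge keeps the element nonzero and strictly shortens the monomials; symmetrically
  if every \<open>\<beta>\<close> is proper. Otherwise the degree is \<open>0\<close> and the element is
  \<open>k v + \<Sum> k\<^sub>e\<^sub>f e\<alpha>'\<beta>'\<^sup>*f\<^sup>*\<close>: a nonzero \<open>e\<^sup>*(\<dots>)f\<close> again shortens the monomials, and if all of
  them vanish the element is a multiple of \<open>v - \<Sum>\<^sub>e\<^sub>\<in>\<^sub>S e e\<^sup>*\<close> for a finite set \<open>S\<close> of edges
  leaving \<open>v\<close>. This is \<open>0\<close> if \<open>v \<in> X\<close>, a vertex if \<open>S = {}\<close>, the required element if
  \<open>S = s\<^sup>-\<^sup>1(v)\<close> and \<open>v \<in> Y\<close>, and otherwise \<open>g\<^sup>*(\<dots>)g\<close> is a multiple of the vertex \<open>r g\<close>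
  for an edge \<open>g \<notin> S\<close>.

  Vertices are nonzero because \<open>C\<^sup>X\<^sub>K(E)\<close> acts on functions on paths modulo those finitely
  supported on paths ending in \<open>X\<close>, and a path ending at a regular vertex can always be prolonged.
  For graded ideals, apply the first part to a homogeneous component outside the kernel.\<close>

section \<open>Multiplication by words\<close>

lemma sum_fun_apply: "(sum F A) w = (\<Sum>x\<in>A. F x w)"
  by (induction A rule: infinite_finite_induct) auto

lemma fadd_eq: "fadd f g = f + g" by (auto simp: fadd_def fun_eq_iff)
lemma fsub_eq: "fsub f g = f - g" by (auto simp: fsub_def fun_eq_iff)
lemma fzero_eq: "fzero = 0" by (auto simp: fzero_def fun_eq_iff)
lemma fsum_eq: "fsum A F = sum F A" by (auto simp: fsum_def fun_eq_iff sum_fun_apply)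

lemma smul_add: "smul k (f + g) = smul k f + smul k g" by (auto simp: smul_def fun_eq_iff algebra_simps)
lemma smul_diff: "smul k (f - g) = smul k f - smul k g" by (auto simp: smul_def fun_eq_iff algebra_simps)
lemma smul_zero[simp]: "smul k 0 = 0" by (auto simp: smul_def fun_eq_iff)
lemma smul_zero_left[simp]: "smul 0 f = 0" by (auto simp: smul_def fun_eq_iff)
lemma smul_one[simp]: "smul 1 f = f" by (auto simp: smul_def fun_eq_iff)
lemma smul_smul: "smul k (smul l f) = smul (k*l) f" by (auto simp: smul_def fun_eq_iff)
lemma smul_sum: "smul k (sum F A) = sum (\<lambda>x. smul k (F x)) A"
  by (auto simp: smul_def fun_eq_iff sum_fun_apply sum_distrib_left)
lemma smul_neg: "smul (-1) f = - f" by (auto simp: smul_def fun_eq_iff)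
lemma smul_add_left: "smul (k + l) f = smul k f + smul l f" by (auto simp: smul_def fun_eq_iff algebra_simps)

definition lmul :: "'a list \<Rightarrow> ('a list \<Rightarrow> 'k::field) \<Rightarrow> ('a list \<Rightarrow> 'k)" where
  "lmul u f = fmul (wmono u) f"
definition rmul :: "('a list \<Rightarrow> 'k::field) \<Rightarrow> 'a list \<Rightarrow> ('a list \<Rightarrow> 'k)" where
  "rmul f u = fmul f (wmono u)"

lemma lmul_formula: "lmul u f w = (if \<exists>x. w = u @ x then f (drop (length u) w) else 0)"
proof -
  have "lmul u f w = (\<Sum>i\<in>{0..length w}. (if i = length u \<and> (\<exists>x. w = u @ x) then f (drop (length u) w) else 0))"
    unfolding lmul_def fmul_def wmono_def
    apply (rule sum.cong, simp)
    apply (auto simp: append_eq_conv_conj)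
    by (metis append_take_drop_id)
  also have "\<dots> = (if \<exists>x. w = u @ x then f (drop (length u) w) else 0)"
    by (auto simp: sum.delta)
  finally show ?thesis .
qed

lemma rmul_formula: "rmul f u w = (if \<exists>x. w = x @ u then f (take (length w - length u) w) else 0)"
proof -
  have "rmul f u w = (\<Sum>i\<in>{0..length w}. (if i = length w - length u \<and> (\<exists>x. w = x @ u) then f (take (length w - length u) w) else 0))"
    unfolding rmul_def fmul_def wmono_def
    apply (rule sum.cong, simp)
    apply (auto simp: append_eq_conv_conj)
    by (metis append_take_drop_id)
  also have "\<dots> = (if \<exists>x. w = x @ u then f (take (length w - length u) w) else 0)"
    by (auto simp: sum.delta)
  finally show ?thesis .
qed

lemma lmul_app: "lmul u f (u @ x) = f x" by (simp add: lmul_formula)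
lemma rmul_app: "rmul f u (x @ u) = f x" by (simp add: rmul_formula)

lemma lmul_add: "lmul u (f + g) = lmul u f + lmul u g" by (auto simp: fun_eq_iff lmul_formula)
lemma rmul_add: "rmul (f + g) u = rmul f u + rmul g u" by (auto simp: fun_eq_iff rmul_formula)
lemma lmul_diff: "lmul u (f - g) = lmul u f - lmul u g" by (auto simp: fun_eq_iff lmul_formula)
lemma rmul_diff: "rmul (f - g) u = rmul f u - rmul g u" by (auto simp: fun_eq_iff rmul_formula)
lemma lmul_zero[simp]: "lmul u 0 = 0" by (auto simp: fun_eq_iff lmul_formula)
lemma rmul_zero[simp]: "rmul 0 u = 0" by (auto simp: fun_eq_iff rmul_formula)
lemma lmul_smul: "lmul u (smul k f) = smul k (lmul u f)" by (auto simp: fun_eq_iff lmul_formula smul_def)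
lemma rmul_smul: "rmul (smul k f) u = smul k (rmul f u)" by (auto simp: fun_eq_iff rmul_formula smul_def)
lemma lmul_sum: "lmul u (sum F A) = sum (\<lambda>x. lmul u (F x)) A"
  by (auto simp: fun_eq_iff lmul_formula sum_fun_apply)
lemma rmul_sum: "rmul (sum F A) u = sum (\<lambda>x. rmul (F x) u) A"
  by (auto simp: fun_eq_iff rmul_formula sum_fun_apply)
lemma lmul_wmono: "lmul u (wmono w) = wmono (u @ w)"
  by (auto simp: fun_eq_iff lmul_formula wmono_def)
lemma rmul_wmono: "rmul (wmono w) u = wmono (w @ u)"
  by (auto simp: fun_eq_iff rmul_formula wmono_def)
lemma lmul_lmul: "lmul u (lmul v f) = lmul (u @ v) f"
  by (auto simp: fun_eq_iff lmul_formula)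
lemma rmul_rmul: "rmul (rmul f u) v = rmul f (u @ v)"
  by (auto simp: fun_eq_iff rmul_formula)
lemma lmul_rmul: "lmul u (rmul f v) = rmul (lmul u f) v"
proof
  fix w
  show "lmul u (rmul f v) w = rmul (lmul u f) v w"
  proof (cases "\<exists>y. w = u @ y @ v")
    case True
    then obtain y where "w = u @ y @ v" by blast
    then show ?thesis by (metis append.assoc lmul_app rmul_app)
  next
    case False
    then have "lmul u (rmul f v) w = 0"
      by (auto simp: lmul_formula rmul_formula)
    moreover have "rmul (lmul u f) v w = 0" using False
      by (auto simp: lmul_formula rmul_formula)
    ultimately show ?thesis by simp
  qed
qed


lemma gens_simps[simp]: "V x \<in> gens E0 E1 \<longleftrightarrow> x \<in> E0" "Ed e \<in> gens E0 E1 \<longleftrightarrow> e \<in> E1"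
   "Gh e \<in> gens E0 E1 \<longleftrightarrow> e \<in> E1"
  by (auto simp: gens_def)

section \<open>Normal monomials and polynomials\<close>

text \<open>\<open>(u, \<alpha>, \<beta>)\<close> stands for \<open>\<alpha>\<beta>\<^sup>*\<close>, where \<open>\<alpha>\<close> and \<open>\<beta>\<close> both end at \<open>u\<close>;
  \<open>(u, [], [])\<close> stands for the vertex \<open>u\<close>. A polynomial is a list of coefficients and
  normal monomials, and \<open>None\<close> encodes a monomial that has become \<open>0\<close>.\<close>

type_synonym ('v,'e) nmono = "'v \<times> 'e list \<times> 'e list"

fun nm_word :: "('v,'e) nmono \<Rightarrow> ('v,'e) gen list" where
  "nm_word (u, as, bs) = (if as = [] \<and> bs = [] then [V u] else map Ed as @ rev (map Gh bs))"

definition eval_opt :: "('v,'e) nmono option \<Rightarrow> (('v,'e) gen list \<Rightarrow> 'k::field)" where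
  "eval_opt t = (case t of None \<Rightarrow> 0 | Some t' \<Rightarrow> wmono (nm_word t'))"

lemma eval_opt_simps[simp]: "eval_opt None = 0" "eval_opt (Some t) = wmono (nm_word t)" by (auto simp: eval_opt_def)

definition lift_terms :: "('t \<Rightarrow> 't option) \<Rightarrow> ('k \<times> 't) list \<Rightarrow> ('k \<times> 't) list" where
  "lift_terms f P = concat (map (\<lambda>(k, t). case f t of None \<Rightarrow> [] | Some t' \<Rightarrow> [(k, t')]) P)"

lemma lift_terms_Nil[simp]: "lift_terms f [] = []" by (simp add: lift_terms_def)
lemma lift_terms_Cons[simp]: "lift_terms f ((k, t) # P) = (case f t of None \<Rightarrow> [] | Some t' \<Rightarrow> [(k, t')]) @ lift_terms f P"
  by (simp add: lift_terms_def)

lemma lift_terms_set: "(k, t') \<in> set (lift_terms f P) \<Longrightarrow> \<exists>t. (k, t) \<in> set P \<and> f t = Some t'"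
proof (induction P)
  case (Cons a P)
  obtain k1 t1 where a: "a = (k1, t1)" by (cases a)
  show ?case
  proof (cases "f t1")
    case None then show ?thesis using Cons a by auto
  next
    case (Some t2)
    then have "(k, t') = (k1, t2) \<or> (k, t') \<in> set (lift_terms f P)" using Cons.prems a by auto
    then show ?thesis using Cons.IH a Some by auto
  qed
qed simp

lemma lift_terms_comp: "lift_terms f (lift_terms h P) = lift_terms (\<lambda>t. Option.bind (h t) f) P"
  by (induction P) (auto split: option.splits)

definition evalh :: "('t \<Rightarrow> ('a list \<Rightarrow> 'k::field)) \<Rightarrow> ('k \<times> 't) list \<Rightarrow> ('a list \<Rightarrow> 'k)" where
  "evalh h P = sum_list (map (\<lambda>(k, t). smul k (h t)) P)"

lemma evalh_Nil[simp]: "evalh h [] = 0" by (simp add: evalh_def)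
lemma evalh_Cons[simp]: "evalh h ((k, t) # P) = smul k (h t) + evalh h P" by (simp add: evalh_def)

lemma evalh_add: "evalh (\<lambda>t. h1 t + h2 t) P = evalh h1 P + evalh h2 P"
  by (induction P) (auto simp: smul_add algebra_simps simp del: plus_fun_apply)
lemma evalh_sum: "evalh (\<lambda>t. sum (\<lambda>i. h i t) F) P = sum (\<lambda>i. evalh (h i) P) F"
  by (induction P) (auto simp: smul_sum sum.distrib simp del: plus_fun_apply)
lemma evalh_cong: "(\<And>k t. (k, t) \<in> set P \<Longrightarrow> h1 t = h2 t) \<Longrightarrow> evalh h1 P = evalh h2 P"
  unfolding evalh_def by (rule arg_cong[where f = sum_list], rule map_cong) auto
lemma evalh_point: "evalh (\<lambda>t. if t = t0 then H else 0) P = smul (sum_list (map (\<lambda>(k,t). if t = t0 then k else 0) P)) H"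
  by (induction P) (auto simp: smul_add_left simp del: plus_fun_apply)

definition evalh_opt :: "('t \<Rightarrow> ('a list \<Rightarrow> 'k::field)) \<Rightarrow> 't option \<Rightarrow> ('a list \<Rightarrow> 'k)" where
  "evalh_opt h t = (case t of None \<Rightarrow> 0 | Some t' \<Rightarrow> h t')"

lemma evalh_lift_terms: "evalh h (lift_terms f P) = evalh (\<lambda>t. evalh_opt h (f t)) P"
  by (induction P) (auto simp: evalh_opt_def split: option.splits simp del: plus_fun_apply)

definition eval_poly :: "('k::field \<times> ('v,'e) nmono) list \<Rightarrow> (('v,'e) gen list \<Rightarrow> 'k)" where
  "eval_poly P = evalh (\<lambda>t. wmono (nm_word t)) P"

lemma evalh_opt_eval_opt: "evalh_opt (\<lambda>t. wmono (nm_word t)) = eval_opt"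
  by (auto simp: fun_eq_iff evalh_opt_def eval_opt_def split: option.splits)

lemma eval_poly_lift_terms: "eval_poly (lift_terms f P) = evalh (\<lambda>t. eval_opt (f t)) P"
  by (simp add: eval_poly_def evalh_lift_terms evalh_opt_eval_opt)

definition poly_size :: "('k \<times> ('v,'e) nmono) list \<Rightarrow> nat" where
  "poly_size P = sum_list (map (\<lambda>(k, (u, as, bs)). length as + length bs) P)"

fun nm_size :: "('v,'e) nmono \<Rightarrow> nat" where "nm_size (u, as, bs) = length as + length bs"

lemma poly_size_alt: "poly_size P = sum_list (map (\<lambda>(k, t). nm_size t) P)"
  unfolding poly_size_def by (rule arg_cong[where f = sum_list], rule map_cong) auto

lemma poly_size_lift_terms_le: "(\<And>k t t'. (k, t) \<in> set P \<Longrightarrow> f t = Some t' \<Longrightarrow> nm_size t' \<le> nm_size t) \<Longrightarrow> poly_size (lift_terms f P) \<le> poly_size P"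
proof (induction P)
  case (Cons a P)
  then show ?case by (cases a) (fastforce simp: poly_size_alt split: option.splits)
qed (simp add: poly_size_alt)

lemma poly_size_lift_terms_less: "(\<And>k t t'. (k, t) \<in> set P \<Longrightarrow> f t = Some t' \<Longrightarrow> nm_size t' \<le> nm_size t \<and> (0 < nm_size t \<longrightarrow> nm_size t' < nm_size t))
  \<Longrightarrow> (k0, t0) \<in> set P \<Longrightarrow> 0 < nm_size t0 \<Longrightarrow> poly_size (lift_terms f P) < poly_size P"
proof (induction P)
  case (Cons a P)
  obtain k t where a: "a = (k, t)" by (cases a)
  have le: "poly_size (lift_terms f P) \<le> poly_size P"
  proof (rule poly_size_lift_terms_le)
    fix k t t' assume "(k, t) \<in> set P" "f t = Some t'"
    then show "nm_size t' \<le> nm_size t" using Cons.prems(1)[of k t t'] by auto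
  qed
  show ?case
  proof (cases "(k0, t0) = a")
    case True
    then show ?thesis using Cons.prems a le by (fastforce simp: poly_size_alt split: option.splits)
  next
    case False
    have pr: "\<And>k t t'. (k, t) \<in> set P \<Longrightarrow> f t = Some t' \<Longrightarrow> nm_size t' \<le> nm_size t \<and> (0 < nm_size t \<longrightarrow> nm_size t' < nm_size t)"
      using Cons.prems(1) by (meson list.set_intros(2))
    have "(k0, t0) \<in> set P" using False Cons.prems(2) by auto
    then have "poly_size (lift_terms f P) < poly_size P"
      apply (rule Cons.IH[rotated])
       apply (rule Cons.prems(3))
      by (rule pr)
    then show ?thesis using Cons.prems a by (fastforce simp: poly_size_alt split: option.splits)
  qed
qed simp

definition nm_deg :: "('v,'e) nmono \<Rightarrow> int" where "nm_deg t = (case t of (u, as, bs) \<Rightarrow> int (length as) - int (length bs))"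

lemma all_nat_Suc_split: "(\<forall>i::nat. Q i) \<longleftrightarrow> Q 0 \<and> (\<forall>j. Q (Suc j))"
  by (metis nat.exhaust)

lemma support_decomp: "finite {w. a w \<noteq> 0} \<Longrightarrow> a = sum (\<lambda>w. smul (a w) (wmono w)) {w. a w \<noteq> 0}"
proof
  fix v assume fin: "finite {w. a w \<noteq> 0}"
  have "sum (\<lambda>w. smul (a w) (wmono w)) {w. a w \<noteq> 0} v = (\<Sum>w\<in>{w. a w \<noteq> 0}. if w = v then a v else 0)"
    by (auto simp: sum_fun_apply smul_def wmono_def intro!: sum.cong)
  also have "\<dots> = a v" using fin by (auto simp: sum.delta')
  finally show "a v = sum (\<lambda>w. smul (a w) (wmono w)) {w. a w \<noteq> 0} v" by simp
qed

definition hom_poly :: "int \<Rightarrow> ('k \<times> ('v,'e) nmono) list \<Rightarrow> bool" where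
  "hom_poly n P \<longleftrightarrow> (\<forall>k t. (k, t) \<in> set P \<longrightarrow> nm_deg t = n)"

lemma hom_poly_lift_terms: "hom_poly n P \<Longrightarrow> (\<And>t t'. f t = Some t' \<Longrightarrow> nm_deg t' = nm_deg t + d) \<Longrightarrow> hom_poly (n + d) (lift_terms f P)"
  unfolding hom_poly_def by (metis lift_terms_set)

fun ghost_word :: "'v + 'e list \<Rightarrow> ('v,'e) gen list" where
  "ghost_word (Inl u) = [V u]" | "ghost_word (Inr es) = rev (map Gh es)"
fun path_word :: "'v + 'e list \<Rightarrow> ('v,'e) gen list" where
  "path_word (Inl u) = [V u]" | "path_word (Inr es) = map Ed es"

lemma pth_star_ghost_word: "pth_star p = wmono (ghost_word p)" by (cases p) (auto simp: pth_star_def)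
lemma pth_path_word: "pth p = wmono (path_word p)" by (cases p) (auto simp: pth_def)

fun path_snoc :: "'v + 'e list \<Rightarrow> 'e \<Rightarrow> 'v + 'e list" where
  "path_snoc (Inl u) e = Inr [e]" | "path_snoc (Inr es) e = Inr (es @ [e])"

lemma lift_terms_filter: "(\<And>t. f t = (if Q t then Some t else None)) \<Longrightarrow> lift_terms f P = filter (\<lambda>(k, t). Q t) P"
  by (induction P) auto

lemma poly_size_filter: "poly_size (filter R P) \<le> poly_size P"
  by (induction P) (auto simp: poly_size_alt)

lemma eval_poly_Nil[simp]: "eval_poly [] = 0" by (simp add: eval_poly_def)
lemma eval_poly_append: "eval_poly (P @ Q) = eval_poly P + eval_poly Q"
  by (induction P) (auto simp: eval_poly_def simp del: plus_fun_apply)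
lemma eval_poly_scale: "eval_poly (map (\<lambda>(k, t). (c * k, t)) P) = smul c (eval_poly P)"
proof (induction P)
  case Nil show ?case by (simp add: eval_poly_def smul_def zero_fun_def)
next
  case (Cons a P) then show ?case by (cases a) (auto simp: eval_poly_def smul_add smul_smul simp del: plus_fun_apply)
qed

lemma free_wmono: "w \<noteq> [] \<Longrightarrow> set w \<subseteq> G \<Longrightarrow> free_elem G (wmono w :: _ \<Rightarrow> 'k::field)"
  unfolding free_elem_def by (rule conjI, rule finite_subset[of _ "{w}"]) (auto simp: wmono_def)

lemma hcomp_decomp: "finite {w. a w \<noteq> 0} \<Longrightarrow> a = sum (\<lambda>n. hcomp n a) (wdeg ` {w. a w \<noteq> (0::'k::field)})"
proof
  fix w assume f: "finite {w. a w \<noteq> 0}"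
  have "sum (\<lambda>n. hcomp n a) (wdeg ` {w. a w \<noteq> 0}) w = (\<Sum>n\<in>wdeg ` {w. a w \<noteq> 0}. if wdeg w = n then a w else 0)"
    by (simp add: sum_fun_apply hcomp_def)
  also have "\<dots> = a w" using f by (auto simp: sum.delta')
  finally show "a w = sum (\<lambda>n. hcomp n a) (wdeg ` {w. a w \<noteq> 0}) w" by simp
qed

section \<open>The ideal of relations\<close>

locale cohn_graph =
  fixes E0 :: "'v set" and E1 :: "'e set" and r s :: "'e \<Rightarrow> 'v" and X :: "'v set"
  assumes graph: "is_graph E0 E1 r s" and XReg: "X \<subseteq> Reg E0 E1 s"
begin

abbreviation "Gen \<equiv> gens E0 E1"

definition Ker :: "(('v,'e) gen list \<Rightarrow> 'k::field) set" where "Ker = cohn_ideal E0 E1 r s X"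

lemma re_E0[simp]: "e \<in> E1 \<Longrightarrow> r e \<in> E0" and se_E0[simp]: "e \<in> E1 \<Longrightarrow> s e \<in> E0"
  using graph by (auto simp: is_graph_def)

lemma Ker_zero[simp]: "0 \<in> Ker"
  unfolding Ker_def cohn_ideal_def using gen_ideal.zero[of "gens E0 E1"] by (simp add: fzero_eq)
lemma Ker_add: "a \<in> Ker \<Longrightarrow> b \<in> Ker \<Longrightarrow> a + b \<in> Ker"
  unfolding Ker_def cohn_ideal_def using gen_ideal.add by (metis fadd_eq)
lemma Ker_smul: "a \<in> Ker \<Longrightarrow> smul k a \<in> Ker"
  unfolding Ker_def cohn_ideal_def using gen_ideal.smul by metis
lemma Ker_neg: "a \<in> Ker \<Longrightarrow> - a \<in> Ker"
  using Ker_smul smul_neg by metis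
lemma Ker_diff: "a \<in> Ker \<Longrightarrow> b \<in> Ker \<Longrightarrow> a - b \<in> Ker"
  using Ker_add Ker_neg by (metis diff_conv_add_uminus)
lemma Ker_sum: "finite A \<Longrightarrow> (\<And>x. x \<in> A \<Longrightarrow> F x \<in> Ker) \<Longrightarrow> sum F A \<in> Ker"
  by (induction A rule: finite_induct) (auto intro: Ker_add)

lemma Ker_gen: "\<rho> \<in> cohn_rels E0 E1 r s X \<Longrightarrow> set p \<subseteq> Gen \<Longrightarrow> set q \<subseteq> Gen \<Longrightarrow> rmul (lmul p \<rho>) q \<in> Ker"
  unfolding Ker_def cohn_ideal_def lmul_def rmul_def by (rule gen_ideal.gen)

lemma Ker_lmul: "a \<in> Ker \<Longrightarrow> set u \<subseteq> Gen \<Longrightarrow> lmul u a \<in> Ker"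
  unfolding Ker_def cohn_ideal_def
proof (induction rule: gen_ideal.induct)
  case (gen \<rho> p q)
  have "lmul u (fmul (fmul (wmono p) \<rho>) (wmono q)) = rmul (lmul (u @ p) \<rho>) q"
    by (simp add: lmul_def[symmetric] rmul_def[symmetric] lmul_rmul lmul_lmul)
  then show ?case using gen Ker_gen[unfolded Ker_def cohn_ideal_def, of \<rho> "u@p" q] by auto
next
  case zero
  have "lmul u fzero = fzero" by (simp add: fzero_eq)
  then show ?case using gen_ideal.zero by metis
next
  case (add a b)
  have "lmul u (fadd a b) = fadd (lmul u a) (lmul u b)" by (simp add: fadd_eq lmul_add)
  then show ?case using add gen_ideal.add by metis
next
  case (smul a k) then show ?case by (simp add: lmul_smul gen_ideal.smul)
qed

lemma Ker_rmul: "a \<in> Ker \<Longrightarrow> set u \<subseteq> Gen \<Longrightarrow> rmul a u \<in> Ker"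
  unfolding Ker_def cohn_ideal_def
proof (induction rule: gen_ideal.induct)
  case (gen \<rho> p q)
  have "rmul (fmul (fmul (wmono p) \<rho>) (wmono q)) u = rmul (lmul p \<rho>) (q @ u)"
    by (simp add: lmul_def[symmetric] rmul_def[symmetric] rmul_rmul)
  then show ?case using gen Ker_gen[unfolded Ker_def cohn_ideal_def, of \<rho> p "q@u"] by auto
next
  case zero
  have "rmul fzero u = fzero" by (simp add: fzero_eq)
  then show ?case using gen_ideal.zero by metis
next
  case (add a b)
  have "rmul (fadd a b) u = fadd (rmul a u) (rmul b u)" by (simp add: fadd_eq rmul_add)
  then show ?case using add gen_ideal.add by metis
next
  case (smul a k) then show ?case by (simp add: rmul_smul gen_ideal.smul)
qed

definition congK :: "(('v,'e) gen list \<Rightarrow> 'k::field) \<Rightarrow> (('v,'e) gen list \<Rightarrow> 'k) \<Rightarrow> bool" where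
  "congK x y \<longleftrightarrow> x - y \<in> Ker"

lemma congK_refl[simp]: "congK x x" by (simp add: congK_def)
lemma congK_sym: "congK x y \<Longrightarrow> congK y x" unfolding congK_def using Ker_neg by fastforce
lemma congK_trans[trans]: "congK x y \<Longrightarrow> congK y z \<Longrightarrow> congK x z" unfolding congK_def using Ker_add by fastforce
lemma congK_add: "congK x y \<Longrightarrow> congK x' y' \<Longrightarrow> congK (x + x') (y + y')" unfolding congK_def
proof -
  assume "x - y \<in> Ker" "x' - y' \<in> Ker"
  moreover have "(x + x') - (y + y') = (x - y) + (x' - y')" by (simp add: algebra_simps)
  ultimately show "(x + x') - (y + y') \<in> Ker" using Ker_add by metis
qed
lemma congK_diff: "congK x y \<Longrightarrow> congK x' y' \<Longrightarrow> congK (x - x') (y - y')" unfolding congK_def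
proof -
  assume "x - y \<in> Ker" "x' - y' \<in> Ker"
  moreover have "(x - x') - (y - y') = (x - y) - (x' - y')" by (simp add: algebra_simps)
  ultimately show "(x - x') - (y - y') \<in> Ker" using Ker_diff by metis
qed
lemma congK_smul: "congK x y \<Longrightarrow> congK (smul k x) (smul k y)" unfolding congK_def
  using Ker_smul by (metis smul_diff)
lemma congK_lmul: "congK x y \<Longrightarrow> set u \<subseteq> Gen \<Longrightarrow> congK (lmul u x) (lmul u y)" unfolding congK_def
  using Ker_lmul by (metis lmul_diff)
lemma congK_rmul: "congK x y \<Longrightarrow> set u \<subseteq> Gen \<Longrightarrow> congK (rmul x u) (rmul y u)" unfolding congK_def
  using Ker_rmul by (metis rmul_diff)
lemma congK_sum: "(\<And>i. i \<in> A \<Longrightarrow> congK (F i) (H i)) \<Longrightarrow> congK (sum F A) (sum H A)"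
proof (induction A rule: infinite_finite_induct)
  case (insert x A)
  then have "congK (F x + sum F A) (H x + sum H A)" by (intro congK_add) auto
  then show ?case using insert by (simp add: sum.insert del: plus_fun_apply)
qed auto
lemma congK_notin_Ker: "congK x y \<Longrightarrow> x \<notin> Ker \<Longrightarrow> y \<notin> Ker"
  unfolding congK_def using Ker_add by fastforce

lemma rel_word: "fsub (wmono x) (wmono y :: _ \<Rightarrow> 'k::field) \<in> cohn_rels E0 E1 r s X \<Longrightarrow> set p \<subseteq> Gen \<Longrightarrow> set q \<subseteq> Gen
   \<Longrightarrow> congK (wmono (p @ x @ q)) (wmono (p @ y @ q) :: _ \<Rightarrow> 'k)"
proof -
  assume a: "fsub (wmono x) (wmono y :: _ \<Rightarrow> 'k) \<in> cohn_rels E0 E1 r s X" "set p \<subseteq> Gen" "set q \<subseteq> Gen"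
  have "rmul (lmul p (fsub (wmono x) (wmono y :: _ \<Rightarrow> 'k))) q \<in> Ker" by (rule Ker_gen[OF a])
  then show ?thesis by (simp add: congK_def fsub_eq lmul_diff rmul_diff lmul_wmono rmul_wmono)
qed
lemma rel_word0: "fsub (wmono x) (fzero :: _ \<Rightarrow> 'k::field) \<in> cohn_rels E0 E1 r s X \<Longrightarrow> set p \<subseteq> Gen \<Longrightarrow> set q \<subseteq> Gen
   \<Longrightarrow> congK (wmono (p @ x @ q)) (0 :: _ \<Rightarrow> 'k)"
proof -
  assume a: "fsub (wmono x) (fzero :: _ \<Rightarrow> 'k) \<in> cohn_rels E0 E1 r s X" "set p \<subseteq> Gen" "set q \<subseteq> Gen"
  have "rmul (lmul p (fsub (wmono x) (fzero :: _ \<Rightarrow> 'k))) q \<in> Ker" by (rule Ker_gen[OF a])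
  then show ?thesis by (simp add: congK_def fsub_eq fzero_eq lmul_diff rmul_diff lmul_wmono rmul_wmono)
qed

context
  fixes p q :: "('v,'e) gen list"
  assumes pq: "set p \<subseteq> Gen" "set q \<subseteq> Gen"
begin

lemma rel_vv: assumes "x \<in> E0" shows "congK (wmono (p @ V x # V x # q)) (wmono (p @ V x # q) :: _ \<Rightarrow> 'k::field)"
proof -
  have "fsub (wmono [V x, V x]) (if x = x then wmono [V x] else (fzero :: _ \<Rightarrow> 'k)) \<in> cohn_rels E0 E1 r s X" unfolding cohn_rels_def using assms by blast
  then show ?thesis using rel_word[OF _ pq, of "[V x, V x]" "[V x]"] assms by simp
qed
lemma rel_vw: assumes "x \<in> E0" "y \<in> E0" "x \<noteq> y" shows "congK (wmono (p @ V x # V y # q)) (0 :: _ \<Rightarrow> 'k::field)"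
proof -
  have "fsub (wmono [V x, V y]) (if x = y then wmono [V x] else (fzero :: _ \<Rightarrow> 'k)) \<in> cohn_rels E0 E1 r s X" unfolding cohn_rels_def using assms by blast
  then show ?thesis using rel_word0[OF _ pq, of "[V x, V y]"] assms by simp
qed
lemma rel_se: assumes "e \<in> E1" shows "congK (wmono (p @ V (s e) # Ed e # q)) (wmono (p @ Ed e # q) :: _ \<Rightarrow> 'k::field)"
proof -
  have "fsub (wmono [V (s e), Ed e]) (wmono [Ed e] :: _ \<Rightarrow> 'k) \<in> cohn_rels E0 E1 r s X" unfolding cohn_rels_def using assms by blast
  then show ?thesis using rel_word[OF _ pq, of "[V (s e), Ed e]" "[Ed e]"] assms by simp
qed
lemma rel_er: assumes "e \<in> E1" shows "congK (wmono (p @ Ed e # V (r e) # q)) (wmono (p @ Ed e # q) :: _ \<Rightarrow> 'k::field)"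
proof -
  have "fsub (wmono [Ed e, V (r e)]) (wmono [Ed e] :: _ \<Rightarrow> 'k) \<in> cohn_rels E0 E1 r s X" unfolding cohn_rels_def using assms by blast
  then show ?thesis using rel_word[OF _ pq, of "[Ed e, V (r e)]" "[Ed e]"] assms by simp
qed
lemma rel_rg: assumes "e \<in> E1" shows "congK (wmono (p @ V (r e) # Gh e # q)) (wmono (p @ Gh e # q) :: _ \<Rightarrow> 'k::field)"
proof -
  have "fsub (wmono [V (r e), Gh e]) (wmono [Gh e] :: _ \<Rightarrow> 'k) \<in> cohn_rels E0 E1 r s X" unfolding cohn_rels_def using assms by blast
  then show ?thesis using rel_word[OF _ pq, of "[V (r e), Gh e]" "[Gh e]"] assms by simp
qed
lemma rel_gs: assumes "e \<in> E1" shows "congK (wmono (p @ Gh e # V (s e) # q)) (wmono (p @ Gh e # q) :: _ \<Rightarrow> 'k::field)"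
proof -
  have "fsub (wmono [Gh e, V (s e)]) (wmono [Gh e] :: _ \<Rightarrow> 'k) \<in> cohn_rels E0 E1 r s X" unfolding cohn_rels_def using assms by blast
  then show ?thesis using rel_word[OF _ pq, of "[Gh e, V (s e)]" "[Gh e]"] assms by simp
qed
lemma rel_gee: assumes "e \<in> E1" shows "congK (wmono (p @ Gh e # Ed e # q)) (wmono (p @ V (r e) # q) :: _ \<Rightarrow> 'k::field)"
proof -
  have "fsub (wmono [Gh e, Ed e]) (if e = e then wmono [V (r e)] else (fzero :: _ \<Rightarrow> 'k)) \<in> cohn_rels E0 E1 r s X" unfolding cohn_rels_def using assms by blast
  then show ?thesis using rel_word[OF _ pq, of "[Gh e, Ed e]" "[V (r e)]"] assms by simp
qed
lemma rel_gef: assumes "e \<in> E1" "f \<in> E1" "e \<noteq> f" shows "congK (wmono (p @ Gh e # Ed f # q)) (0 :: _ \<Rightarrow> 'k::field)"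
proof -
  have "fsub (wmono [Gh e, Ed f]) (if e = f then wmono [V (r e)] else (fzero :: _ \<Rightarrow> 'k)) \<in> cohn_rels E0 E1 r s X" unfolding cohn_rels_def using assms by blast
  then show ?thesis using rel_word0[OF _ pq, of "[Gh e, Ed f]"] assms by simp
qed
end

lemma rel_gap: assumes "v \<in> X" "set p \<subseteq> Gen" "set q \<subseteq> Gen"
  shows "congK (wmono (p @ V v # q)) (sum (\<lambda>e. wmono (p @ Ed e # Gh e # q)) {e\<in>E1. s e = v} :: _ \<Rightarrow> 'k::field)"
proof -
  have "(gap E1 s v :: _ \<Rightarrow> 'k) \<in> cohn_rels E0 E1 r s X" unfolding cohn_rels_def using assms by blast
  then have "rmul (lmul p (gap E1 s v :: _ \<Rightarrow> 'k)) q \<in> Ker" using Ker_gen assms by blast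
  then show ?thesis
    by (simp add: congK_def gap_def fsub_eq fsum_eq lmul_diff rmul_diff lmul_wmono rmul_wmono lmul_sum rmul_sum)
qed

section \<open>Normal forms modulo the relations\<close>

definition lvert :: "('v,'e) gen \<Rightarrow> 'v" where "lvert g = (case g of V x \<Rightarrow> x | Ed e \<Rightarrow> s e | Gh e \<Rightarrow> r e)"
definition rvert :: "('v,'e) gen \<Rightarrow> 'v" where "rvert g = (case g of V x \<Rightarrow> x | Ed e \<Rightarrow> r e | Gh e \<Rightarrow> s e)"

lemma lvert_simps[simp]: "lvert (V x) = x" "lvert (Ed e) = s e" "lvert (Gh e) = r e" by (auto simp: lvert_def)
lemma rvert_simps[simp]: "rvert (V x) = x" "rvert (Ed e) = r e" "rvert (Gh e) = s e" by (auto simp: rvert_def)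
lemma lvert_E0: "g \<in> Gen \<Longrightarrow> lvert g \<in> E0" by (cases g) auto
lemma rvert_E0: "g \<in> Gen \<Longrightarrow> rvert g \<in> E0" by (cases g) auto

lemma vertex_absorb_l: assumes "g \<in> Gen" "set p \<subseteq> Gen" "set q \<subseteq> Gen"
  shows "congK (wmono (p @ V (lvert g) # g # q)) (wmono (p @ g # q) :: _ \<Rightarrow> 'k::field)"
  using assms by (cases g) (auto intro: rel_vv rel_se rel_rg)

lemma vertex_absorb_r: assumes "g \<in> Gen" "set p \<subseteq> Gen" "set q \<subseteq> Gen"
  shows "congK (wmono (p @ g # V (rvert g) # q)) (wmono (p @ g # q) :: _ \<Rightarrow> 'k::field)"
  using assms by (cases g) (auto intro: rel_vv rel_er rel_gs)

lemma mismatch_zero: assumes "ga \<in> Gen" "gb \<in> Gen" "set p \<subseteq> Gen" "set q \<subseteq> Gen" "rvert ga \<noteq> lvert gb"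
  shows "congK (wmono (p @ ga # gb # q)) (0 :: _ \<Rightarrow> 'k::field)"
proof -
  have "congK (wmono (p @ ga # gb # q)) (wmono (p @ ga # V (rvert ga) # gb # q) :: _ \<Rightarrow> 'k)"
    using vertex_absorb_r[of ga p "gb # q"] assms by (auto intro: congK_sym)
  also have "congK (wmono (p @ ga # V (rvert ga) # gb # q)) (wmono ((p @ [ga, V (rvert ga)]) @ V (lvert gb) # gb # q) :: _ \<Rightarrow> 'k)"
    using vertex_absorb_l[of gb "p @ [ga, V (rvert ga)]" q] assms rvert_E0 by (auto intro: congK_sym)
  also have "congK (wmono ((p @ [ga, V (rvert ga)]) @ V (lvert gb) # gb # q)) (0 :: _ \<Rightarrow> 'k)"
    using rel_vw[of "p @ [ga]" "gb # q" "rvert ga" "lvert gb"] assms rvert_E0 lvert_E0 by auto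
  finally show ?thesis .
qed

definition chain :: "'e list \<Rightarrow> bool" where "chain es = successively (\<lambda>e f. r e = s f) es"

fun nm_valid :: "('v,'e) nmono \<Rightarrow> bool" where
  "nm_valid (u, as, bs) \<longleftrightarrow> u \<in> E0 \<and> set as \<subseteq> E1 \<and> set bs \<subseteq> E1 \<and> chain as \<and> chain bs
     \<and> (as \<noteq> [] \<longrightarrow> r (last as) = u) \<and> (bs \<noteq> [] \<longrightarrow> r (last bs) = u)"

definition start :: "'e list \<Rightarrow> 'v \<Rightarrow> 'v" where
  "start es u = (case es of [] \<Rightarrow> u | e # _ \<Rightarrow> s e)"

lemma start_simps[simp]: "start [] u = u" "start (e # es) u = s e" by (auto simp: start_def)
lemma start_if: "start es u = (if es = [] then u else s (hd es))" by (cases es) auto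

lemma chain_simps[simp]: "chain []" "chain [e]"
  "chain (e # f # es) \<longleftrightarrow> r e = s f \<and> chain (f # es)" by (auto simp: chain_def)
lemma chain_Cons: "chain (e # es) \<longleftrightarrow> (es = [] \<or> r e = s (hd es)) \<and> chain es"
  by (cases es) auto
lemma chain_app1: "chain (es @ [f]) \<longleftrightarrow> chain es \<and> (es = [] \<or> r (last es) = s f)"
  by (induction es rule: induct_list012) (auto simp: chain_Cons)

text \<open>Multiplication of a normal monomial by a generator, using only relations that turn a
  monomial into a monomial or \<open>0\<close>.\<close>

fun act_l :: "('v,'e) gen \<Rightarrow> ('v,'e) nmono \<Rightarrow> ('v,'e) nmono option" where
  "act_l (V x) (u, as, bs) = (if start as u = x then Some (u, as, bs) else None)"
| "act_l (Ed e) (u, as, bs) = (if r e = start as u then Some (u, e # as, bs) else None)"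
| "act_l (Gh e) (u, [], bs) = (if s e = u then Some (r e, [], bs @ [e]) else None)"
| "act_l (Gh e) (u, f # as, bs) = (if f = e then Some (u, as, bs) else None)"

fun act_r :: "('v,'e) gen \<Rightarrow> ('v,'e) nmono \<Rightarrow> ('v,'e) nmono option" where
  "act_r (V x) (u, as, bs) = (if start bs u = x then Some (u, as, bs) else None)"
| "act_r (Gh f) (u, as, bs) = (if r f = start bs u then Some (u, as, f # bs) else None)"
| "act_r (Ed f) (u, as, []) = (if s f = u then Some (r f, as @ [f], []) else None)"
| "act_r (Ed f) (u, as, b # bs) = (if b = f then Some (u, as, bs) else None)"

lemma img_Gen[simp]: "Ed ` A \<subseteq> Gen \<longleftrightarrow> A \<subseteq> E1" "Gh ` A \<subseteq> Gen \<longleftrightarrow> A \<subseteq> E1" "V ` U \<subseteq> Gen \<longleftrightarrow> U \<subseteq> E0"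
  by (auto simp: gens_def)

lemma nm_word_first: assumes "nm_valid (u, as, bs)"
  shows "\<exists>g1 w. nm_word (u, as, bs) = g1 # w \<and> lvert g1 = start as u \<and> g1 \<in> Gen \<and> set w \<subseteq> Gen"
  using assms
proof (cases as)
  case Nil
  then show ?thesis using assms
    by (cases bs rule: rev_cases) auto
next
  case (Cons a as')
  then show ?thesis using assms by auto
qed

lemma nm_word_last: assumes "nm_valid (u, as, bs)"
  shows "\<exists>g1 w. nm_word (u, as, bs) = w @ [g1] \<and> rvert g1 = start bs u \<and> g1 \<in> Gen \<and> set w \<subseteq> Gen"
  using assms
proof (cases bs)
  case Nil
  then show ?thesis using assms
    by (cases as rule: rev_cases) auto
next
  case (Cons b bs')
  then show ?thesis using assms by auto
qed

lemma nm_valid_tail: "nm_valid (u, a # as, bs) \<Longrightarrow> nm_valid (u, as, bs)"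
  by (cases as) auto

lemma act_l_valid: "nm_valid t \<Longrightarrow> g \<in> Gen \<Longrightarrow> act_l g t = Some t' \<Longrightarrow> nm_valid t'"
proof (cases t)
  case (fields u as bs)
  assume a: "nm_valid t" "g \<in> Gen" "act_l g t = Some t'"
  show ?thesis
  proof (cases g)
    case (Gh e)
    then show ?thesis using a fields
      by (cases as) (auto simp: chain_app1 chain_Cons split: if_splits dest: nm_valid_tail)
  qed (use a fields in \<open>auto simp: chain_app1 chain_Cons start_if split: if_splits\<close>)
qed

lemma act_l_congK: assumes vt: "nm_valid t" and g: "g \<in> Gen"
  shows "congK (wmono (g # nm_word t)) (eval_opt (act_l g t) :: _ \<Rightarrow> 'k::field)"
proof -
  obtain u as bs where t: "t = (u, as, bs)" by (cases t)
  obtain g1 w where gw: "nm_word t = g1 # w" "lvert g1 = start as u" "g1 \<in> Gen" "set w \<subseteq> Gen"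
    using nm_word_first vt t by blast
  have mm: "congK (wmono (g # nm_word t)) (0 :: _ \<Rightarrow> 'k)" if "rvert g \<noteq> start as u"
    using mismatch_zero[where p = "[]" and ga = g and gb = g1 and q = w] gw g that by auto
  show ?thesis
  proof (cases g)
    case (V x)
    show ?thesis
    proof (cases "start as u = x")
      case True
      then show ?thesis using vertex_absorb_l[where p = "[]" and q = w and g = g1] gw V t by auto
    next
      case False then show ?thesis using mm V t by auto
    qed
  next
    case (Ed e)
    show ?thesis
    proof (cases "r e = start as u")
      case True
      show ?thesis
      proof (cases "as = [] \<and> bs = []")
        case True
        then show ?thesis using rel_er[where p = "[]" and q = "[]" and e = e] g Ed t \<open>r e = start as u\<close> by auto
      qed (use True Ed t in auto)
    next
      case False then show ?thesis using mm Ed t by auto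
    qed
  next
    case (Gh e)
    show ?thesis
    proof (cases as)
      case Nil
      show ?thesis
      proof (cases "s e = u")
        case True
        show ?thesis
        proof (cases "bs = []")
          case True
          then show ?thesis using rel_gs[where p = "[]" and q = "[]" and e = e] g Gh t Nil \<open>s e = u\<close> by auto
        qed (use True Gh t Nil in auto)
      next
        case False then show ?thesis using mm Gh t Nil by auto
      qed
    next
      case (Cons f as')
      show ?thesis
      proof (cases "f = e")
        case True
        have v': "nm_valid (u, as', bs)" using vt t Cons nm_valid_tail by blast
        have e1: "congK (wmono (g # nm_word t)) (wmono (V (r e) # map Ed as' @ rev (map Gh bs)) :: _ \<Rightarrow> 'k)"
          using rel_gee[where p = "[]" and q = "map Ed as' @ rev (map Gh bs)" and e = e] g Gh t Cons True vt
          by auto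
        show ?thesis
        proof (cases "as' = [] \<and> bs = []")
          case True
          then have "u = r e" using vt t Cons \<open>f = e\<close> by auto
          then show ?thesis using e1 True Gh t Cons \<open>f = e\<close> by auto
        next
          case False
          obtain g2 w2 where gw2: "nm_word (u, as', bs) = g2 # w2" "lvert g2 = start as' u" "g2 \<in> Gen" "set w2 \<subseteq> Gen"
            using nm_word_first v' by blast
          have "lvert g2 = r e" using gw2 vt t Cons \<open>f = e\<close> by (cases as') auto
          then have "congK (wmono (V (r e) # nm_word (u, as', bs))) (wmono (nm_word (u, as', bs)) :: _ \<Rightarrow> 'k)"
            using vertex_absorb_l[where p = "[]" and q = w2 and g = g2] gw2 by auto
          then show ?thesis using e1 False Gh t Cons \<open>f = e\<close> by (auto intro: congK_trans)
        qed
      next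
        case False
        then show ?thesis using rel_gef[where p = "[]" and q = "map Ed as' @ rev (map Gh bs)" and e = e and f = f]
            g Gh t Cons vt by auto
      qed
    qed
  qed
qed

lemma nm_valid_tail2: "nm_valid (u, as, b # bs) \<Longrightarrow> nm_valid (u, as, bs)"
  by (cases bs) auto

lemma act_r_valid: "nm_valid t \<Longrightarrow> g \<in> Gen \<Longrightarrow> act_r g t = Some t' \<Longrightarrow> nm_valid t'"
proof (cases t)
  case (fields u as bs)
  assume a: "nm_valid t" "g \<in> Gen" "act_r g t = Some t'"
  show ?thesis
  proof (cases g)
    case (Ed e)
    then show ?thesis using a fields
      by (cases bs) (auto simp: chain_app1 chain_Cons start_if split: if_splits dest: nm_valid_tail2)
  qed (use a fields in \<open>auto simp: chain_app1 chain_Cons start_if split: if_splits\<close>)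
qed

lemma act_r_congK: assumes vt: "nm_valid t" and g: "g \<in> Gen"
  shows "congK (wmono (nm_word t @ [g])) (eval_opt (act_r g t) :: _ \<Rightarrow> 'k::field)"
proof -
  obtain u as bs where t: "t = (u, as, bs)" by (cases t)
  obtain g1 w where gw: "nm_word t = w @ [g1]" "rvert g1 = start bs u" "g1 \<in> Gen" "set w \<subseteq> Gen"
    using nm_word_last vt t by blast
  have mm: "congK (wmono (nm_word t @ [g])) (0 :: _ \<Rightarrow> 'k)" if "lvert g \<noteq> start bs u"
    using mismatch_zero[where p = w and ga = g1 and gb = g and q = "[]"] gw g that by auto
  show ?thesis
  proof (cases g)
    case (V x)
    show ?thesis
    proof (cases "start bs u = x")
      case True
      then show ?thesis using vertex_absorb_r[where p = w and q = "[]" and g = g1] gw V t by auto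
    next
      case False then show ?thesis using mm V t by auto
    qed
  next
    case (Gh e)
    show ?thesis
    proof (cases "r e = start bs u")
      case True
      show ?thesis
      proof (cases "as = [] \<and> bs = []")
        case True
        then show ?thesis using rel_rg[where p = "[]" and q = "[]" and e = e] g Gh t \<open>r e = start bs u\<close> by auto
      qed (use True Gh t in auto)
    next
      case False then show ?thesis using mm Gh t by auto
    qed
  next
    case (Ed e)
    show ?thesis
    proof (cases bs)
      case Nil
      show ?thesis
      proof (cases "s e = u")
        case True
        show ?thesis
        proof (cases "as = []")
          case True
          then show ?thesis using rel_se[where p = "[]" and q = "[]" and e = e] g Ed t Nil \<open>s e = u\<close> by auto
        qed (use True Ed t Nil in auto)
      next
        case False then show ?thesis using mm Ed t Nil by auto
      qed
    next
      case (Cons f bs')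
      show ?thesis
      proof (cases "f = e")
        case True
        have v': "nm_valid (u, as, bs')" using vt t Cons nm_valid_tail2 by blast
        have e1: "congK (wmono (nm_word t @ [g])) (wmono ((map Ed as @ rev (map Gh bs')) @ [V (r e)]) :: _ \<Rightarrow> 'k)"
          using rel_gee[where q = "[]" and p = "map Ed as @ rev (map Gh bs')" and e = e] g Ed t Cons True vt
          by auto
        show ?thesis
        proof (cases "as = [] \<and> bs' = []")
          case True
          then have "u = r e" using vt t Cons \<open>f = e\<close> by auto
          then show ?thesis using e1 True Ed t Cons \<open>f = e\<close> by auto
        next
          case False
          obtain g2 w2 where gw2: "nm_word (u, as, bs') = w2 @ [g2]" "rvert g2 = start bs' u" "g2 \<in> Gen" "set w2 \<subseteq> Gen"
            using nm_word_last v' by blast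
          have "rvert g2 = r e" using gw2 vt t Cons \<open>f = e\<close> by (cases bs') auto
          then have "congK (wmono (nm_word (u, as, bs') @ [V (r e)])) (wmono (nm_word (u, as, bs')) :: _ \<Rightarrow> 'k)"
            using vertex_absorb_r[where p = w2 and q = "[]" and g = g2] gw2 by auto
          then show ?thesis using e1 False Ed t Cons \<open>f = e\<close> by (auto intro: congK_trans)
        qed
      next
        case False
        then show ?thesis using rel_gef[where q = "[]" and p = "map Ed as @ rev (map Gh bs')" and e = f and f = e]
            g Ed t Cons vt by auto
      qed
    qed
  qed
qed

declare nm_valid.simps[simp del]

definition valid_poly :: "('k \<times> ('v,'e) nmono) list \<Rightarrow> bool" where
  "valid_poly P \<longleftrightarrow> (\<forall>k t. (k, t) \<in> set P \<longrightarrow> nm_valid t)"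

lemma valid_poly_lift_terms: "valid_poly P \<Longrightarrow> (\<And>t t'. nm_valid t \<Longrightarrow> f t = Some t' \<Longrightarrow> nm_valid t') \<Longrightarrow> valid_poly (lift_terms f P)"
proof -
  assume a: "valid_poly P" "\<And>t t'. nm_valid t \<Longrightarrow> f t = Some t' \<Longrightarrow> nm_valid t'"
  show ?thesis unfolding valid_poly_def
  proof (intro allI impI)
    fix k t' assume "(k, t') \<in> set (lift_terms f P)"
    then obtain t where "(k, t) \<in> set P" "f t = Some t'" using lift_terms_set by metis
    then show "nm_valid t'" using a unfolding valid_poly_def by metis
  qed
qed

lemma eval_poly_lift_terms_congK_L: "valid_poly P \<Longrightarrow> g \<in> Gen \<Longrightarrow> congK (lmul [g] (eval_poly P)) (eval_poly (lift_terms (act_l g) P) :: _ \<Rightarrow> 'k::field)"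
proof (induction P)
  case Nil then show ?case by (simp only: eval_poly_def evalh_Nil lmul_zero rmul_zero lift_terms_Nil congK_refl)
next
  case (Cons a P)
  obtain k t where a: "a = (k, t)" by (cases a)
  have v: "nm_valid t" "valid_poly P" using Cons.prems(1) a unfolding valid_poly_def by (metis list.set_intros(1), metis list.set_intros(2))
  have "congK (smul k (wmono (g # nm_word t)) + lmul [g] (eval_poly P)) (smul k (eval_opt (act_l g t)) + eval_poly (lift_terms (act_l g) P) :: _ \<Rightarrow> 'k)"
    by (rule congK_add[OF congK_smul[OF act_l_congK[OF v(1) Cons.prems(2)]] Cons.IH[OF v(2) Cons.prems(2)]])
  then have "congK (lmul [g] (smul k (wmono (nm_word t))) + lmul [g] (eval_poly P)) (smul k (eval_opt (act_l g t)) + eval_poly (lift_terms (act_l g) P) :: _ \<Rightarrow> 'k)"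
    by (simp add: lmul_smul lmul_wmono del: plus_fun_apply)
  moreover have "eval_poly (lift_terms (act_l g) (a # P)) = smul k (eval_opt (act_l g t)) + eval_poly (lift_terms (act_l g) P)"
    unfolding a eval_poly_lift_terms by (simp only: evalh_Cons)
  ultimately show ?case using a by (simp add: eval_poly_def lmul_add del: plus_fun_apply)
qed

lemma eval_poly_lift_terms_congK_R: "valid_poly P \<Longrightarrow> g \<in> Gen \<Longrightarrow> congK (rmul (eval_poly P) [g]) (eval_poly (lift_terms (act_r g) P) :: _ \<Rightarrow> 'k::field)"
proof (induction P)
  case Nil then show ?case by (simp only: eval_poly_def evalh_Nil lmul_zero rmul_zero lift_terms_Nil congK_refl)
next
  case (Cons a P)
  obtain k t where a: "a = (k, t)" by (cases a)
  have v: "nm_valid t" "valid_poly P" using Cons.prems(1) a unfolding valid_poly_def by (metis list.set_intros(1), metis list.set_intros(2))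
  have "congK (smul k (wmono (nm_word t @ [g])) + rmul (eval_poly P) [g]) (smul k (eval_opt (act_r g t)) + eval_poly (lift_terms (act_r g) P) :: _ \<Rightarrow> 'k)"
    by (rule congK_add[OF congK_smul[OF act_r_congK[OF v(1) Cons.prems(2)]] Cons.IH[OF v(2) Cons.prems(2)]])
  then have "congK (rmul (smul k (wmono (nm_word t))) [g] + rmul (eval_poly P) [g]) (smul k (eval_opt (act_r g t)) + eval_poly (lift_terms (act_r g) P) :: _ \<Rightarrow> 'k)"
    by (simp add: rmul_smul rmul_wmono del: plus_fun_apply)
  moreover have "eval_poly (lift_terms (act_r g) (a # P)) = smul k (eval_opt (act_r g t)) + eval_poly (lift_terms (act_r g) P)"
    unfolding a eval_poly_lift_terms by (simp only: evalh_Cons)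
  ultimately show ?case using a by (simp add: eval_poly_def rmul_add del: plus_fun_apply)
qed

section \<open>Vertices are not in the kernel\<close>

text \<open>The transpose of the action on the span of paths \<open>(v, es)\<close>: a vertex restricts, an edge \<open>e\<close>
  strips a leading \<open>e\<close>, a ghost \<open>e\<^sup>*\<close> prepends \<open>e\<close>. Every relation, hence the whole kernel,
  maps all functions into \<open>Null\<close>.\<close>

definition rep_gen :: "('v,'e) gen \<Rightarrow> ('v \<times> 'e list \<Rightarrow> 'k::field) \<Rightarrow> ('v \<times> 'e list \<Rightarrow> 'k)" where
  "rep_gen g \<phi> = (case g of
      V x \<Rightarrow> (\<lambda>(v, es). if v = x then \<phi> (v, es) else 0)
    | Ed e \<Rightarrow> (\<lambda>(v, es). if es \<noteq> [] \<and> hd es = e \<and> v = s e then \<phi> (r e, tl es) else 0)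
    | Gh e \<Rightarrow> (\<lambda>(v, es). if v = r e then \<phi> (s e, e # es) else 0))"

fun rep_word :: "('v,'e) gen list \<Rightarrow> ('v \<times> 'e list \<Rightarrow> 'k::field) \<Rightarrow> ('v \<times> 'e list \<Rightarrow> 'k)" where
  "rep_word [] \<phi> = \<phi>" | "rep_word (g # w) \<phi> = rep_gen g (rep_word w \<phi>)"

lemma rep_word_append: "rep_word (u @ w) \<phi> = rep_word u (rep_word w \<phi>)"
  by (induction u) auto

lemma sum_if_zero: "(\<Sum>x\<in>A. c x * (if C then f x else 0)) = (if C then \<Sum>x\<in>A. c x * f x else (0::'k::field))"
  by (cases C) auto

lemma rep_gen_lin: "rep_gen g (\<lambda>p. \<Sum>x\<in>A. c x * \<psi> x p) = (\<lambda>p. \<Sum>x\<in>A. c x * rep_gen g (\<psi> x) p)"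
proof (rule ext)
  fix p :: "'v \<times> 'e list"
  obtain v es where p: "p = (v, es)" by (cases p)
  show "rep_gen g (\<lambda>p. \<Sum>x\<in>A. c x * \<psi> x p) p = (\<Sum>x\<in>A. c x * rep_gen g (\<psi> x) p)"
    unfolding p by (cases g) (simp_all only: rep_gen_def gen.case prod.case sum_if_zero)
qed

lemma rep_word_lin: "rep_word u (\<lambda>p. \<Sum>x\<in>A. c x * \<psi> x p) = (\<lambda>p. \<Sum>x\<in>A. c x * rep_word u (\<psi> x) p)"
proof (induction u)
  case (Cons g u)
  then show ?case by (simp add: rep_gen_lin)
qed simp

definition rep :: "(('v,'e) gen list \<Rightarrow> 'k::field) \<Rightarrow> ('v \<times> 'e list \<Rightarrow> 'k) \<Rightarrow> ('v \<times> 'e list \<Rightarrow> 'k)" where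
  "rep x \<phi> = (\<lambda>p. \<Sum>w\<in>{w. x w \<noteq> 0}. x w * rep_word w \<phi> p)"

lemma rep_set: "finite A \<Longrightarrow> {w. x w \<noteq> 0} \<subseteq> A \<Longrightarrow> rep x \<phi> p = (\<Sum>w\<in>A. x w * rep_word w \<phi> p)"
  unfolding rep_def by (rule sum.mono_neutral_left) auto

fun is_epath :: "'v \<times> 'e list \<Rightarrow> bool" where
  "is_epath (v, es) \<longleftrightarrow> v \<in> E0 \<and> set es \<subseteq> E1 \<and> chain es \<and> (es \<noteq> [] \<longrightarrow> s (hd es) = v)"

fun epath_end :: "'v \<times> 'e list \<Rightarrow> 'v" where
  "epath_end (v, es) = (if es = [] then v else r (last es))"

declare is_epath.simps[simp del] epath_end.simps[simp del]

definition Null :: "('v \<times> 'e list \<Rightarrow> 'k::field) set" where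
  "Null = {\<phi>. finite {p. is_epath p \<and> \<phi> p \<noteq> 0} \<and> (\<forall>p. is_epath p \<and> \<phi> p \<noteq> 0 \<longrightarrow> epath_end p \<in> X)}"

lemma Null_zero: "(\<lambda>p. 0) \<in> Null" by (simp add: Null_def)

lemma Null_add: "\<phi> \<in> Null \<Longrightarrow> \<psi> \<in> Null \<Longrightarrow> (\<lambda>p. \<phi> p + \<psi> p) \<in> Null"
proof -
  assume a: "\<phi> \<in> Null" "\<psi> \<in> Null"
  have "{p. is_epath p \<and> \<phi> p + \<psi> p \<noteq> 0} \<subseteq> {p. is_epath p \<and> \<phi> p \<noteq> 0} \<union> {p. is_epath p \<and> \<psi> p \<noteq> 0}" by auto
  then have "finite {p. is_epath p \<and> \<phi> p + \<psi> p \<noteq> 0}" using a unfolding Null_def by (auto intro: finite_subset)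
  moreover have "epath_end p \<in> X" if "is_epath p" "\<phi> p + \<psi> p \<noteq> 0" for p
  proof -
    have "\<phi> p \<noteq> 0 \<or> \<psi> p \<noteq> 0" using that(2) by auto
    then show ?thesis using a that(1) unfolding Null_def by blast
  qed
  ultimately show ?thesis unfolding Null_def by blast
qed

lemma Null_smul: "\<phi> \<in> Null \<Longrightarrow> (\<lambda>p. k * \<phi> p) \<in> Null"
proof -
  assume a: "\<phi> \<in> Null"
  have "{p. is_epath p \<and> k * \<phi> p \<noteq> 0} \<subseteq> {p. is_epath p \<and> \<phi> p \<noteq> 0}" by auto
  then show ?thesis using a unfolding Null_def by (auto intro: finite_subset)
qed

lemma Null_eqI: "\<phi> \<in> Null \<Longrightarrow> (\<And>p. is_epath p \<Longrightarrow> \<psi> p = \<phi> p) \<Longrightarrow> \<psi> \<in> Null"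
proof -
  assume a: "\<phi> \<in> Null" "\<And>p. is_epath p \<Longrightarrow> \<psi> p = \<phi> p"
  then have eq: "{p. is_epath p \<and> \<psi> p \<noteq> 0} = {p. is_epath p \<and> \<phi> p \<noteq> 0}" by auto
  show ?thesis unfolding Null_def
  proof (intro CollectI conjI allI impI)
    show "finite {p. is_epath p \<and> \<psi> p \<noteq> 0}" using eq a(1) unfolding Null_def by simp
  next
    fix p assume "is_epath p \<and> \<psi> p \<noteq> 0"
    then have "is_epath p \<and> \<phi> p \<noteq> 0" using a(2)[of p] by simp
    then show "epath_end p \<in> X" using a(1) unfolding Null_def by blast
  qed
qed

lemma is_epath_Cons: "e \<in> E1 \<Longrightarrow> is_epath (s e, e # es) \<longleftrightarrow> is_epath (r e, es)"
  by (auto simp: is_epath.simps chain_Cons)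
lemma epath_end_Cons: "epath_end (s e, e # es) = epath_end (r e, es)"
  by (cases es) (auto simp: epath_end.simps)

lemma rep_gen_V: "rep_gen (V x) \<phi> p \<noteq> 0 \<Longrightarrow> \<phi> p \<noteq> 0"
  by (cases p) (auto simp: rep_gen_def split: if_splits)
lemma rep_gen_Ed: "rep_gen (Ed e) \<phi> (v, es) \<noteq> 0 \<Longrightarrow> \<exists>es'. es = e # es' \<and> v = s e \<and> \<phi> (r e, es') \<noteq> 0"
  by (cases es) (auto simp: rep_gen_def split: if_splits)
lemma rep_gen_Gh: "rep_gen (Gh e) \<phi> (v, es) \<noteq> 0 \<Longrightarrow> v = r e \<and> \<phi> (s e, e # es) \<noteq> 0"
  by (auto simp: rep_gen_def split: if_splits)

lemma Null_I: "finite {p. is_epath p \<and> \<psi> p \<noteq> 0} \<Longrightarrow> (\<And>p. is_epath p \<Longrightarrow> \<psi> p \<noteq> 0 \<Longrightarrow> epath_end p \<in> X) \<Longrightarrow> \<psi> \<in> Null"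
  unfolding Null_def by blast
lemma Null_D: "\<phi> \<in> Null \<Longrightarrow> finite {p. is_epath p \<and> \<phi> p \<noteq> 0}" "\<phi> \<in> Null \<Longrightarrow> is_epath p \<Longrightarrow> \<phi> p \<noteq> 0 \<Longrightarrow> epath_end p \<in> X"
  unfolding Null_def by blast+

lemma rep_gen_Null: assumes "g \<in> Gen" "\<phi> \<in> Null" shows "rep_gen g \<phi> \<in> Null"
proof (cases g)
  case (V x)
  have "{p. is_epath p \<and> rep_gen g \<phi> p \<noteq> 0} \<subseteq> {p. is_epath p \<and> \<phi> p \<noteq> 0}" using V rep_gen_V by blast
  then show ?thesis using Null_D[OF assms(2)] V rep_gen_V
    by (intro Null_I) (auto intro: finite_subset)
next
  case (Ed e)
  have e: "e \<in> E1" using assms Ed by simp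
  have key: "\<exists>es'. p = (s e, e # es') \<and> is_epath (r e, es') \<and> \<phi> (r e, es') \<noteq> 0 \<and> epath_end p = epath_end (r e, es')"
    if vpp: "is_epath p" and nz: "rep_gen g \<phi> p \<noteq> 0" for p
  proof -
    obtain v es where pv: "p = (v, es)" by (cases p)
    obtain es' where es: "es = e # es'" "v = s e" "\<phi> (r e, es') \<noteq> 0" using rep_gen_Ed nz pv Ed by blast
    then show ?thesis using vpp pv is_epath_Cons[OF e] epath_end_Cons by auto
  qed
  have "{p. is_epath p \<and> rep_gen g \<phi> p \<noteq> 0} \<subseteq> (\<lambda>(v, es). (s e, e # es)) ` {p. is_epath p \<and> \<phi> p \<noteq> 0}"
    using key by fastforce
  then have "finite {p. is_epath p \<and> rep_gen g \<phi> p \<noteq> 0}" using Null_D(1)[OF assms(2)] by (auto intro: finite_subset)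
  then show ?thesis using key Null_D(2)[OF assms(2)] by (intro Null_I) metis+
next
  case (Gh e)
  have e: "e \<in> E1" using assms Gh by simp
  have key: "p = (r e, snd p) \<and> is_epath (s e, e # snd p) \<and> \<phi> (s e, e # snd p) \<noteq> 0 \<and> epath_end p = epath_end (s e, e # snd p)"
    if vpp: "is_epath p" and nz: "rep_gen g \<phi> p \<noteq> 0" for p
  proof -
    obtain v es where pv: "p = (v, es)" by (cases p)
    then have "v = r e" "\<phi> (s e, e # es) \<noteq> 0" using rep_gen_Gh nz Gh by blast+
    then show ?thesis using vpp pv is_epath_Cons[OF e] epath_end_Cons by auto
  qed
  have "{p. is_epath p \<and> rep_gen g \<phi> p \<noteq> 0} \<subseteq> (\<lambda>(v, es). (r e, tl es)) ` {p. is_epath p \<and> \<phi> p \<noteq> 0}"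
  proof
    fix p assume "p \<in> {p. is_epath p \<and> rep_gen g \<phi> p \<noteq> 0}"
    then have k: "p = (r e, snd p) \<and> is_epath (s e, e # snd p) \<and> \<phi> (s e, e # snd p) \<noteq> 0" using key by blast
    then show "p \<in> (\<lambda>(v, es). (r e, tl es)) ` {p. is_epath p \<and> \<phi> p \<noteq> 0}"
      by (intro image_eqI[of _ _ "(s e, e # snd p)"]) auto
  qed
  then have "finite {p. is_epath p \<and> rep_gen g \<phi> p \<noteq> 0}" using Null_D(1)[OF assms(2)] by (auto intro: finite_subset)
  then show ?thesis using key Null_D(2)[OF assms(2)] by (intro Null_I) metis+
qed

lemma rep_word_Null: "set u \<subseteq> Gen \<Longrightarrow> \<phi> \<in> Null \<Longrightarrow> rep_word u \<phi> \<in> Null"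
  by (induction u) (auto intro: rep_gen_Null)

lemma rep_wmono: "rep (wmono w) \<phi> = rep_word w \<phi>"
proof
  fix p
  have "rep (wmono w) \<phi> p = (\<Sum>x\<in>{w}. wmono w x * rep_word x \<phi> p)"
    by (rule rep_set) (auto simp: wmono_def)
  then show "rep (wmono w) \<phi> p = rep_word w \<phi> p" by (simp add: wmono_def)
qed

lemma rep_add: "finite {w. x w \<noteq> 0} \<Longrightarrow> finite {w. y w \<noteq> 0} \<Longrightarrow> rep (x + y) \<phi> = (\<lambda>p. rep x \<phi> p + rep y \<phi> p)"
proof
  fix p assume f: "finite {w. x w \<noteq> 0}" "finite {w. y w \<noteq> 0}"
  let ?A = "{w. x w \<noteq> 0} \<union> {w. y w \<noteq> 0}"
  have "rep (x + y) \<phi> p = (\<Sum>w\<in>?A. (x + y) w * rep_word w \<phi> p)" by (rule rep_set) (use f in auto)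
  also have "\<dots> = (\<Sum>w\<in>?A. x w * rep_word w \<phi> p) + (\<Sum>w\<in>?A. y w * rep_word w \<phi> p)"
    by (simp add: distrib_right sum.distrib)
  also have "\<dots> = rep x \<phi> p + rep y \<phi> p"
  proof -
    have "rep x \<phi> p = (\<Sum>w\<in>?A. x w * rep_word w \<phi> p)" by (rule rep_set) (use f in auto)
    moreover have "rep y \<phi> p = (\<Sum>w\<in>?A. y w * rep_word w \<phi> p)" by (rule rep_set) (use f in auto)
    ultimately show ?thesis by simp
  qed
  finally show "rep (x + y) \<phi> p = rep x \<phi> p + rep y \<phi> p" .
qed

lemma rep_smul: "finite {w. x w \<noteq> 0} \<Longrightarrow> rep (smul k x) \<phi> = (\<lambda>p. k * rep x \<phi> p)"
proof
  fix p assume f: "finite {w. x w \<noteq> 0}"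
  have "rep (smul k x) \<phi> p = (\<Sum>w\<in>{w. x w \<noteq> 0}. smul k x w * rep_word w \<phi> p)" by (rule rep_set) (use f in \<open>auto simp: smul_def\<close>)
  also have "\<dots> = k * rep x \<phi> p" by (simp add: rep_def smul_def sum_distrib_left mult.assoc)
  finally show "rep (smul k x) \<phi> p = k * rep x \<phi> p" .
qed

lemma rep_diff: "finite {w. x w \<noteq> 0} \<Longrightarrow> finite {w. y w \<noteq> 0} \<Longrightarrow> rep (x - y) \<phi> = (\<lambda>p. rep x \<phi> p - rep y \<phi> p)"
proof -
  assume f: "finite {w. x w \<noteq> 0}" "finite {w. y w \<noteq> 0}"
  have e: "x - y = x + smul (-1) y" by (auto simp: smul_def fun_eq_iff)
  have f2: "finite {w. smul (-1) y w \<noteq> 0}" using f(2) by (simp add: smul_def)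
  have "rep (x - y) \<phi> = rep (x + smul (-1) y) \<phi>" by (simp only: e)
  also have "\<dots> = (\<lambda>p. rep x \<phi> p + rep (smul (-1) y) \<phi> p)" by (rule rep_add[OF f(1) f2])
  also have "\<dots> = (\<lambda>p. rep x \<phi> p - rep y \<phi> p)" by (simp add: rep_smul[OF f(2)])
  finally show ?thesis .
qed

lemma rep_sum: "finite A \<Longrightarrow> (\<And>i. i \<in> A \<Longrightarrow> finite {w. F i w \<noteq> 0}) \<Longrightarrow> rep (sum F A) \<phi> = (\<lambda>p. \<Sum>i\<in>A. rep (F i) \<phi> p)"
proof (induction A rule: finite_induct)
  case empty then show ?case by (simp add: rep_def)
next
  case (insert i A)
  have "finite {w. sum F A w \<noteq> 0}"
  proof (rule finite_subset)
    show "{w. sum F A w \<noteq> 0} \<subseteq> (\<Union>i\<in>A. {w. F i w \<noteq> 0})"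
      by (auto simp: sum_fun_apply dest: sum.not_neutral_contains_not_neutral)
  qed (use insert in auto)
  then show ?case using insert by (simp add: rep_add del: plus_fun_apply)
qed

lemma support_lmul_rmul: "{w. rmul (lmul u \<rho>) v w \<noteq> 0} = (\<lambda>x. u @ x @ v) ` {x. \<rho> x \<noteq> 0}"
proof (rule set_eqI)
  fix w
  show "w \<in> {w. rmul (lmul u \<rho>) v w \<noteq> 0} \<longleftrightarrow> w \<in> (\<lambda>x. u @ x @ v) ` {x. \<rho> x \<noteq> 0}"
  proof
    assume "w \<in> {w. rmul (lmul u \<rho>) v w \<noteq> 0}"
    then have nz: "rmul (lmul u \<rho>) v w \<noteq> 0" by simp
    have "\<exists>y. w = y @ v"
    proof (rule ccontr)
      assume "\<not> (\<exists>y. w = y @ v)"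
      then have "rmul (lmul u \<rho>) v w = 0" by (simp add: rmul_formula)
      then show False using nz by simp
    qed
    then obtain y where y: "w = y @ v" by blast
    then have ny: "lmul u \<rho> y \<noteq> 0" using nz rmul_app[of "lmul u \<rho>" v y] by simp
    have "\<exists>x. y = u @ x"
    proof (rule ccontr)
      assume "\<not> (\<exists>x. y = u @ x)"
      then have "lmul u \<rho> y = 0" by (simp add: lmul_formula)
      then show False using ny by simp
    qed
    then obtain x where x: "y = u @ x" by blast
    then have "\<rho> x \<noteq> 0" using ny lmul_app[of u \<rho> x] by simp
    then show "w \<in> (\<lambda>x. u @ x @ v) ` {x. \<rho> x \<noteq> 0}" using x y by auto
  next
    assume "w \<in> (\<lambda>x. u @ x @ v) ` {x. \<rho> x \<noteq> 0}"
    then obtain x where "w = u @ x @ v" "\<rho> x \<noteq> 0" by auto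
    moreover have "rmul (lmul u \<rho>) v (u @ x @ v) = \<rho> x"
      using rmul_app[of "lmul u \<rho>" v "u @ x"] lmul_app[of u \<rho> x] by simp
    ultimately show "w \<in> {w. rmul (lmul u \<rho>) v w \<noteq> 0}" by simp
  qed
qed

lemma rep_lmul_rmul: assumes f: "finite {x. \<rho> x \<noteq> 0}"
  shows "rep (rmul (lmul u \<rho>) v) \<phi> = rep_word u (rep \<rho> (rep_word v \<phi>))"
proof
  fix p
  have inj: "inj (\<lambda>x. u @ x @ v)" by (auto simp: inj_def)
  have "rep (rmul (lmul u \<rho>) v) \<phi> p = (\<Sum>w\<in>(\<lambda>x. u @ x @ v) ` {x. \<rho> x \<noteq> 0}. rmul (lmul u \<rho>) v w * rep_word w \<phi> p)"
    unfolding rep_def support_lmul_rmul ..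
  also have "\<dots> = (\<Sum>x\<in>{x. \<rho> x \<noteq> 0}. rmul (lmul u \<rho>) v (u @ x @ v) * rep_word (u @ x @ v) \<phi> p)"
    by (rule sum.reindex[OF inj_on_subset[OF inj], simplified])
  also have "\<dots> = (\<Sum>x\<in>{x. \<rho> x \<noteq> 0}. \<rho> x * rep_word u (rep_word x (rep_word v \<phi>)) p)"
  proof (rule sum.cong)
    fix x
    have "rmul (lmul u \<rho>) v (u @ x @ v) = \<rho> x"
      using rmul_app[of "lmul u \<rho>" v "u @ x"] lmul_app[of u \<rho> x] by simp
    moreover have "rep_word (u @ x @ v) \<phi> = rep_word u (rep_word x (rep_word v \<phi>))" by (simp only: rep_word_append)
    ultimately show "rmul (lmul u \<rho>) v (u @ x @ v) * rep_word (u @ x @ v) \<phi> p = \<rho> x * rep_word u (rep_word x (rep_word v \<phi>)) p"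
      by simp
  qed simp
  also have "\<dots> = rep_word u (rep \<rho> (rep_word v \<phi>)) p"
    unfolding rep_def rep_word_lin by simp
  finally show "rep (rmul (lmul u \<rho>) v) \<phi> p = rep_word u (rep \<rho> (rep_word v \<phi>)) p" .
qed

lemma finite_wmono: "finite {w. wmono x w \<noteq> (0::'k::field)}"
  by (rule finite_subset[of _ "{x}"]) (auto simp: wmono_def)

lemma rep_fsub_wmono: "rep (fsub (wmono x) (wmono y) :: _ \<Rightarrow> 'k::field) \<psi> = (\<lambda>p. rep_word x \<psi> p - rep_word y \<psi> p)"
  by (simp only: fsub_eq rep_diff[OF finite_wmono finite_wmono] rep_wmono)

lemma rep_fsub_zero: "rep (fsub (wmono x) fzero :: _ \<Rightarrow> 'k::field) \<psi> = rep_word x \<psi>"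
  by (simp add: fsub_eq fzero_eq rep_wmono)

lemma finite_fsub_wmono: "finite {w. fsub (wmono x) (wmono y) w \<noteq> (0::'k::field)}"
  by (rule finite_subset[of _ "{x, y}"]) (auto simp: wmono_def fsub_def)
lemma finite_fsub_zero: "finite {w. fsub (wmono x) fzero w \<noteq> (0::'k::field)}"
  by (rule finite_subset[of _ "{x}"]) (auto simp: wmono_def fsub_def fzero_def)

lemma Null_zeroI: "(\<And>p. \<psi> p = 0) \<Longrightarrow> \<psi> \<in> Null"
  using Null_eqI[OF Null_zero] by metis

lemma rep_word_VV: "rep_word [V a, V b] \<psi> p = (if a = b then rep_word [V a] \<psi> p else (0::'k::field))"
  by (cases p) (simp add: rep_gen_def)
lemma rep_word_sE: "rep_word [V (s e), Ed e] \<psi> p = (rep_word [Ed e] \<psi> p :: 'k::field)"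
  by (cases p) (simp add: rep_gen_def)
lemma rep_word_Er: "rep_word [Ed e, V (r e)] \<psi> p = (rep_word [Ed e] \<psi> p :: 'k::field)"
  by (cases p) (simp add: rep_gen_def)
lemma rep_word_rG: "rep_word [V (r e), Gh e] \<psi> p = (rep_word [Gh e] \<psi> p :: 'k::field)"
  by (cases p) (simp add: rep_gen_def)
lemma rep_word_Gs: "rep_word [Gh e, V (s e)] \<psi> p = (rep_word [Gh e] \<psi> p :: 'k::field)"
  by (cases p) (simp add: rep_gen_def)
lemma rep_word_GE: "rep_word [Gh e, Ed f] \<psi> p = (if e = f then rep_word [V (r e)] \<psi> p else (0::'k::field))"
  by (cases p) (auto simp: rep_gen_def)
lemma rep_gen_Ed_Gh: "rep_gen (Ed e) (rep_gen (Gh e) \<psi>) (x, es) = (if es \<noteq> [] \<and> hd es = e \<and> x = s e then \<psi> (x, es) else (0::'k::field))"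
  by (cases es) (auto simp: rep_gen_def)
lemma rep_gen_V_eq: "rep_gen (V v) \<psi> (x, es) = (if x = v then \<psi> (x, es) else (0::'k::field))"
  by (simp add: rep_gen_def)

lemma rel_words_rep_Null: "(\<And>\<psi> p. rep_word x \<psi> p = (rep_word y \<psi> p :: 'k::field)) \<Longrightarrow>
   finite {w. fsub (wmono x) (wmono y) w \<noteq> (0::'k)} \<and> (\<forall>\<psi>. rep (fsub (wmono x) (wmono y) :: _ \<Rightarrow> 'k) \<psi> \<in> Null)"
  using finite_fsub_wmono by (auto simp: rep_fsub_wmono intro!: Null_zeroI)

lemma rel_word_zero_rep_Null: "(\<And>\<psi> p. rep_word x \<psi> p = (0 :: 'k::field)) \<Longrightarrow>
   finite {w. fsub (wmono x) fzero w \<noteq> (0::'k)} \<and> (\<forall>\<psi>. rep (fsub (wmono x) fzero :: _ \<Rightarrow> 'k) \<psi> \<in> Null)"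
  using finite_fsub_zero by (auto simp: rep_fsub_zero intro!: Null_zeroI)

lemma finite_support_edge_ghosts:
  assumes finS: "finite Sv"
  shows "finite {w. sum (\<lambda>e. wmono [Ed e, Gh e]) Sv w \<noteq> (0::'k::field)}"
proof (rule finite_subset)
  show "{w. sum (\<lambda>e. wmono [Ed e, Gh e]) Sv w \<noteq> (0::'k)} \<subseteq> (\<lambda>e. [Ed e, Gh e]) ` Sv"
  proof
    fix w assume "w \<in> {w. sum (\<lambda>e. wmono [Ed e, Gh e]) Sv w \<noteq> (0::'k)}"
    then have "(\<Sum>e\<in>Sv. (wmono [Ed e, Gh e] w :: 'k)) \<noteq> 0" by (simp add: sum_fun_apply)
    then obtain e where "e \<in> Sv" "(wmono [Ed e, Gh e] w :: 'k) \<noteq> 0" by (meson sum.not_neutral_contains_not_neutral)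
    then show "w \<in> (\<lambda>e. [Ed e, Gh e]) ` Sv" by (auto simp: wmono_def split: if_splits)
  qed
qed (use finS in simp)

lemma rep_gap_vanishes:
  assumes fin: "finite {e \<in> E1. s e = v}" and pe: "is_epath p" "p \<noteq> (v, [])"
  shows "rep (gap E1 s v :: _ \<Rightarrow> 'k::field) \<psi> p = 0"
proof -
  define Sv where "Sv = {e \<in> E1. s e = v}"
  have finS: "finite Sv" using fin unfolding Sv_def .
  have geq: "gap E1 s v = (wmono [V v] - sum (\<lambda>e. wmono [Ed e, Gh e]) Sv :: _ \<Rightarrow> 'k)"
    unfolding gap_def Sv_def by (simp add: fsub_eq fsum_eq)
  have rep_gap: "rep (gap E1 s v) \<psi> = (\<lambda>p. rep_word [V v] \<psi> p - (\<Sum>e\<in>Sv. rep_word [Ed e, Gh e] \<psi> p))" for \<psi> :: "_ \<Rightarrow> 'k"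
    unfolding geq by (simp add: rep_diff[OF finite_wmono finite_support_edge_ghosts[OF finS]] rep_sum[OF finS] finite_wmono rep_wmono)
  obtain x es where p: "p = (x, es)" by (cases p)
  have vpp: "x \<in> E0" "set es \<subseteq> E1" "es \<noteq> [] \<longrightarrow> s (hd es) = x" using pe(1) p by (auto simp: is_epath.simps)
  have T: "rep (gap E1 s v) \<psi> p = rep_gen (V v) \<psi> (x, es) - (\<Sum>e\<in>Sv. rep_gen (Ed e) (rep_gen (Gh e) \<psi>) (x, es))"
    unfolding rep_gap p by simp
  show ?thesis
  proof (cases "x = v")
    case False
    have "(\<Sum>e\<in>Sv. rep_gen (Ed e) (rep_gen (Gh e) \<psi>) (x, es)) = 0"
    proof (rule sum.neutral, rule ballI)
      fix e assume "e \<in> Sv"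
      then have "s e = v" unfolding Sv_def by simp
      then show "rep_gen (Ed e) (rep_gen (Gh e) \<psi>) (x, es) = 0" using False by (simp only: rep_gen_Ed_Gh) simp
    qed
    moreover have "rep_gen (V v) \<psi> (x, es) = 0" using False by (simp only: rep_gen_V_eq) simp
    ultimately show ?thesis using T by simp
  next
    case True
    then have ne: "es \<noteq> []" using pe(2) p by auto
    then have hS: "hd es \<in> Sv" using vpp True unfolding Sv_def by auto
    have "(\<Sum>e\<in>Sv. rep_gen (Ed e) (rep_gen (Gh e) \<psi>) (x, es)) = (\<Sum>e\<in>Sv. if e = hd es then \<psi> (x, es) else 0)"
    proof (rule sum.cong)
      fix e assume "e \<in> Sv"
      then have "s e = v" unfolding Sv_def by simp
      then show "rep_gen (Ed e) (rep_gen (Gh e) \<psi>) (x, es) = (if e = hd es then \<psi> (x, es) else 0)"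
        using ne True by (simp only: rep_gen_Ed_Gh) auto
    qed simp
    also have "\<dots> = \<psi> (x, es)" using finS hS by simp
    finally show ?thesis using T True by (simp only: rep_gen_V_eq) simp
  qed
qed

lemma gap_rep_Null: assumes vX: "v \<in> X"
  shows "finite {w. gap E1 s v w \<noteq> (0::'k::field)} \<and> (\<forall>\<psi>. rep (gap E1 s v :: _ \<Rightarrow> 'k) \<psi> \<in> Null)"
proof -
  define Sv where "Sv = {e \<in> E1. s e = v}"
  have finS: "finite Sv" using vX XReg unfolding Sv_def Reg_def by auto
  have geq: "gap E1 s v = (wmono [V v] - sum (\<lambda>e. wmono [Ed e, Gh e]) Sv :: _ \<Rightarrow> 'k)"
    unfolding gap_def Sv_def by (simp add: fsub_eq fsum_eq)
  have fin: "finite {w. gap E1 s v w \<noteq> (0::'k)}"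
  proof (rule finite_subset)
    show "{w. gap E1 s v w \<noteq> (0::'k)} \<subseteq> {w. wmono [V v] w \<noteq> (0::'k)} \<union> {w. sum (\<lambda>e. wmono [Ed e, Gh e]) Sv w \<noteq> (0::'k)}"
    proof
      fix w assume "w \<in> {w. gap E1 s v w \<noteq> (0::'k)}"
      then have "wmono [V v] w - sum (\<lambda>e. wmono [Ed e, Gh e]) Sv w \<noteq> (0::'k)" unfolding geq by simp
      then show "w \<in> {w. wmono [V v] w \<noteq> (0::'k)} \<union> {w. sum (\<lambda>e. wmono [Ed e, Gh e]) Sv w \<noteq> (0::'k)}"
        by auto
    qed
  qed (rule finite_UnI[OF finite_wmono finite_support_edge_ghosts[OF finS]])
  have "rep (gap E1 s v) \<psi> \<in> Null" for \<psi> :: "_ \<Rightarrow> 'k"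
  proof (rule Null_I)
    note z = rep_gap_vanishes[OF finS[unfolded Sv_def], where \<psi> = \<psi>]
    show "finite {p. is_epath p \<and> rep (gap E1 s v) \<psi> p \<noteq> 0}"
      by (rule finite_subset[of _ "{(v, [])}"]) (use z in auto)
    fix p assume "is_epath p" "rep (gap E1 s v) \<psi> p \<noteq> 0"
    then have "p = (v, [])" using z by blast
    then show "epath_end p \<in> X" using vX by (simp add: epath_end.simps)
  qed
  then show ?thesis using fin by blast
qed

lemma rel_rep_Null: assumes "\<rho> \<in> cohn_rels E0 E1 r s X"
  shows "finite {w. \<rho> w \<noteq> (0::'k::field)} \<and> (\<forall>\<psi>. rep \<rho> \<psi> \<in> Null)"
  using assms unfolding cohn_rels_def
proof (elim UnE CollectE exE conjE)
  fix v w assume \<rho>: "\<rho> = fsub (wmono [V v, V w]) (if v = w then wmono [V v] else fzero)"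
  show ?thesis
  proof (cases "v = w")
    case True
    have e: "(if v = w then wmono [V v] else fzero) = (wmono [V w] :: _ \<Rightarrow> 'k)" using True by simp
    show ?thesis unfolding \<rho> e unfolding True by (rule rel_words_rep_Null) (use rep_word_VV[of w w] in simp)
  next
    case False
    have e: "(if v = w then wmono [V v] else fzero) = (fzero :: _ \<Rightarrow> 'k)" using False by simp
    show ?thesis unfolding \<rho> e by (rule rel_word_zero_rep_Null) (use rep_word_VV[of v w] False in simp)
  qed
next
  fix e assume \<rho>: "\<rho> = fsub (wmono [V (s e), Ed e]) (wmono [Ed e])"
  show ?thesis unfolding \<rho> by (rule rel_words_rep_Null) (simp only: rep_word_sE)
next
  fix e assume \<rho>: "\<rho> = fsub (wmono [Ed e, V (r e)]) (wmono [Ed e])"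
  show ?thesis unfolding \<rho> by (rule rel_words_rep_Null) (simp only: rep_word_Er)
next
  fix e assume \<rho>: "\<rho> = fsub (wmono [V (r e), Gh e]) (wmono [Gh e])"
  show ?thesis unfolding \<rho> by (rule rel_words_rep_Null) (simp only: rep_word_rG)
next
  fix e assume \<rho>: "\<rho> = fsub (wmono [Gh e, V (s e)]) (wmono [Gh e])"
  show ?thesis unfolding \<rho> by (rule rel_words_rep_Null) (simp only: rep_word_Gs)
next
  fix e f assume \<rho>: "\<rho> = fsub (wmono [Gh e, Ed f]) (if e = f then wmono [V (r e)] else fzero)"
  show ?thesis
  proof (cases "e = f")
    case True
    have e: "(if e = f then wmono [V (r e)] else fzero) = (wmono [V (r e)] :: _ \<Rightarrow> 'k)" using True by simp
    show ?thesis unfolding \<rho> e unfolding True by (rule rel_words_rep_Null) (use rep_word_GE[of f f] in simp)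
  next
    case False
    have e: "(if e = f then wmono [V (r e)] else fzero) = (fzero :: _ \<Rightarrow> 'k)" using False by simp
    show ?thesis unfolding \<rho> e by (rule rel_word_zero_rep_Null) (use rep_word_GE[of e f] False in simp)
  qed
next
  fix v assume "\<rho> = gap E1 s v" "v \<in> X"
  then show ?thesis using gap_rep_Null by blast
qed

lemma Ker_rep_Null: "x \<in> Ker \<Longrightarrow> finite {w. x w \<noteq> (0::'k::field)} \<and> (\<forall>\<phi>. rep x \<phi> \<in> Null)"
  unfolding Ker_def cohn_ideal_def
proof (induction rule: gen_ideal.induct)
  case (gen \<rho> u v)
  have e: "fmul (fmul (wmono u) \<rho>) (wmono v) = rmul (lmul u \<rho>) v" by (simp add: lmul_def rmul_def)
  have r: "finite {w. \<rho> w \<noteq> 0}" "\<And>\<psi>. rep \<rho> \<psi> \<in> Null" using rel_rep_Null[OF gen(1)] by auto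
  have "finite {w. rmul (lmul u \<rho>) v w \<noteq> 0}" unfolding support_lmul_rmul using r(1) by simp
  moreover have "rep (rmul (lmul u \<rho>) v) \<phi> \<in> Null" for \<phi>
    unfolding rep_lmul_rmul[OF r(1)] by (rule rep_word_Null[OF gen(2) r(2)])
  ultimately show ?case unfolding e by blast
next
  case zero
  have "rep fzero \<phi> = (\<lambda>p. 0)" for \<phi> :: "_ \<Rightarrow> 'k" by (simp add: rep_def fzero_def)
  then show ?case using Null_zero by (simp add: fzero_def)
next
  case (add a b)
  have f: "finite {w. fadd a b w \<noteq> 0}"
    by (rule finite_subset[of _ "{w. a w \<noteq> 0} \<union> {w. b w \<noteq> 0}"]) (use add in \<open>auto simp: fadd_def\<close>)
  have "rep (fadd a b) \<phi> \<in> Null" for \<phi>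
    unfolding fadd_eq rep_add[OF add.IH(1)[THEN conjunct1] add.IH(2)[THEN conjunct1]]
    by (rule Null_add) (use add.IH in auto)
  then show ?case using f by blast
next
  case (smul a k)
  have f: "finite {w. smul k a w \<noteq> 0}"
    by (rule finite_subset[of _ "{w. a w \<noteq> 0}"]) (use smul in \<open>auto simp: smul_def\<close>)
  have "rep (smul k a) \<phi> \<in> Null" for \<phi>
    unfolding rep_smul[OF smul.IH[THEN conjunct1]] by (rule Null_smul) (use smul.IH in auto)
  then show ?case using f by blast
qed

text \<open>A path of maximal length in the support of the indicator of paths at \<open>u\<close> would end
  in \<open>X \<subseteq> Reg\<close>, so it could be prolonged.\<close>

lemma vertex_notin_Ker: assumes u: "u \<in> E0" shows "(wmono [V u] :: _ \<Rightarrow> 'k::field) \<notin> Ker"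
proof
  assume "(wmono [V u] :: _ \<Rightarrow> 'k) \<in> Ker"
  define \<phi> :: "'v \<times> 'e list \<Rightarrow> 'k" where "\<phi> = (\<lambda>(x, es). if x = u then 1 else 0)"
  have "rep (wmono [V u] :: _ \<Rightarrow> 'k) \<phi> \<in> Null" using Ker_rep_Null[OF \<open>_ \<in> Ker\<close>] by blast
  moreover have "rep (wmono [V u] :: _ \<Rightarrow> 'k) \<phi> = \<phi>"
    unfolding rep_wmono by (auto simp: fun_eq_iff rep_gen_def \<phi>_def)
  ultimately have phS: "\<phi> \<in> Null" by simp
  define M where "M = {p. is_epath p \<and> \<phi> p \<noteq> 0}"
  have finM: "finite M" using Null_D(1)[OF phS] unfolding M_def .
  have u0: "(u, []) \<in> M" using u unfolding M_def \<phi>_def by (simp add: is_epath.simps)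
  have Mu: "p \<in> M \<Longrightarrow> fst p = u \<and> is_epath p" for p unfolding M_def \<phi>_def by (cases p) (auto split: if_splits)
  define m where "m = Max ((\<lambda>p. length (snd p)) ` M)"
  have "m \<in> (\<lambda>p. length (snd p)) ` M" unfolding m_def by (rule Max_in) (use finM u0 in auto)
  then obtain p where pM: "p \<in> M" and pm: "length (snd p) = m" by auto
  obtain es where p: "p = (u, es)" using Mu[OF pM] by (cases p) auto
  have vpp: "is_epath (u, es)" using Mu[OF pM] p by simp
  have "epath_end p \<in> X" using Null_D(2)[OF phS] pM unfolding M_def by blast
  then have "epath_end p \<in> Reg E0 E1 s" using XReg by blast
  then obtain e where e: "e \<in> E1" "s e = epath_end p" unfolding Reg_def by blast
  have "is_epath (u, es @ [e])"
  proof (cases "es = []")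
    case True then show ?thesis using vpp e p by (simp add: is_epath.simps epath_end.simps)
  next
    case False then show ?thesis using vpp e p by (simp add: is_epath.simps epath_end.simps chain_app1 hd_append)
  qed
  then have "(u, es @ [e]) \<in> M" unfolding M_def \<phi>_def by simp
  then have "length (es @ [e]) \<le> m" unfolding m_def using finM by (intro Max_ge) force+
  then show False using pm p by simp
qed

section \<open>Sandwiching by paths\<close>

lemma chain_nth: "chain es \<longleftrightarrow> (\<forall>i. Suc i < length es \<longrightarrow> r (es ! i) = s (es ! Suc i))"
proof (induction es rule: induct_list012)
  case (3 x y zs)
  show ?case
    apply (subst all_nat_Suc_split)
    using 3(2) by auto
qed auto

fun path_end :: "'v + 'e list \<Rightarrow> 'v" where
  "path_end (Inl u) = u" | "path_end (Inr es) = r (last es)"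

lemma is_path_Inl[simp]: "is_path E0 E1 r s (Inl u) \<longleftrightarrow> u \<in> E0" by (simp add: is_path_def)
lemma is_path_Inr[simp]: "is_path E0 E1 r s (Inr es) \<longleftrightarrow> es \<noteq> [] \<and> set es \<subseteq> E1 \<and> chain es"
  by (simp add: is_path_def chain_nth)

lemma path_end_E0: "is_path E0 E1 r s p \<Longrightarrow> path_end p \<in> E0"
  by (cases p) (auto intro!: re_E0 dest!: last_in_set)

lemma path_snoc_path: "is_path E0 E1 r s p \<Longrightarrow> e \<in> E1 \<Longrightarrow> s e = path_end p \<Longrightarrow> is_path E0 E1 r s (path_snoc p e) \<and> path_end (path_snoc p e) = r e"
  by (cases p) (auto simp: chain_app1)

lemma ghost_word_Gen: "is_path E0 E1 r s p \<Longrightarrow> set (ghost_word p) \<subseteq> Gen" by (cases p) auto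
lemma path_word_Gen: "is_path E0 E1 r s p \<Longrightarrow> set (path_word p) \<subseteq> Gen" by (cases p) auto

context
  fixes a :: "('v,'e) gen list \<Rightarrow> 'k::field"
  assumes fa: "finite {w. a w \<noteq> 0}" "\<And>w. a w \<noteq> 0 \<Longrightarrow> set w \<subseteq> Gen"
begin

definition sandwich :: "'v + 'e list \<Rightarrow> 'v + 'e list \<Rightarrow> (('v,'e) gen list \<Rightarrow> 'k)" where
  "sandwich \<mu> \<eta> = fmul (fmul (pth_star \<mu>) a) (pth \<eta>)"

lemma sandwich_words: "sandwich \<mu> \<eta> = rmul (lmul (ghost_word \<mu>) a) (path_word \<eta>)"
  by (simp add: sandwich_def pth_star_ghost_word pth_path_word lmul_def rmul_def)

lemma lmul_eq_sum: "lmul x a = sum (\<lambda>w. smul (a w) (wmono (x @ w))) {w. a w \<noteq> 0}"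
  by (subst support_decomp[OF fa(1)]) (simp add: lmul_sum lmul_smul lmul_wmono)

lemma sandwich_congK_l: assumes "congK (wmono x) (wmono y :: _ \<Rightarrow> 'k)" "set q \<subseteq> Gen"
  shows "congK (rmul (lmul x a) q) (rmul (lmul y a) q)"
proof -
  have "congK (rmul (wmono (x @ w)) q) (rmul (wmono (y @ w)) q :: _ \<Rightarrow> 'k)" if "a w \<noteq> 0" for w
    using congK_rmul[OF congK_rmul[OF assms(1), of w]] fa(2)[OF that] assms(2) by (simp add: rmul_wmono)
  then have "congK (sum (\<lambda>w. smul (a w) (rmul (wmono (x @ w)) q)) {w. a w \<noteq> 0})
                 (sum (\<lambda>w. smul (a w) (rmul (wmono (y @ w)) q)) {w. a w \<noteq> 0})"
    by (intro congK_sum congK_smul) auto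
  then show ?thesis by (simp add: lmul_eq_sum rmul_sum rmul_smul)
qed

lemma sandwich_congK_r: assumes "congK (wmono x) (wmono y :: _ \<Rightarrow> 'k)" "set p \<subseteq> Gen"
  shows "congK (rmul (lmul p a) x) (rmul (lmul p a) y)"
proof -
  have "congK (lmul (p @ w) (wmono x)) (lmul (p @ w) (wmono y) :: _ \<Rightarrow> 'k)" if "a w \<noteq> 0" for w
    using congK_lmul[OF assms(1), of "p @ w"] fa(2)[OF that] assms(2) by simp
  then have "congK (sum (\<lambda>w. smul (a w) (lmul (p @ w) (wmono x))) {w. a w \<noteq> 0})
                 (sum (\<lambda>w. smul (a w) (lmul (p @ w) (wmono y))) {w. a w \<noteq> 0})"
    by (intro congK_sum congK_smul) auto
  then show ?thesis by (simp add: lmul_eq_sum rmul_sum rmul_smul lmul_wmono rmul_wmono)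
qed

lemma sandwich_extend_l: assumes "is_path E0 E1 r s \<mu>" "is_path E0 E1 r s \<eta>" "e \<in> E1" "s e = path_end \<mu>"
  shows "congK (sandwich (path_snoc \<mu> e) \<eta>) (lmul [Gh e] (sandwich \<mu> \<eta>))"
proof (cases \<mu>)
  case (Inl u)
  have "congK (wmono [Gh e]) (wmono [Gh e, V u] :: _ \<Rightarrow> 'k)"
    using rel_gs[where p = "[]" and q = "[]" and e = e] assms Inl by (auto intro: congK_sym)
  then show ?thesis using sandwich_congK_l[of "[Gh e]" "[Gh e, V u]" "path_word \<eta>"] path_word_Gen[OF assms(2)] Inl
    by (simp add: sandwich_words lmul_rmul lmul_lmul)
next
  case (Inr es)
  then show ?thesis by (simp add: sandwich_words lmul_rmul lmul_lmul)
qed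

lemma sandwich_extend_r: assumes "is_path E0 E1 r s \<mu>" "is_path E0 E1 r s \<eta>" "f \<in> E1" "s f = path_end \<eta>"
  shows "congK (sandwich \<mu> (path_snoc \<eta> f)) (rmul (sandwich \<mu> \<eta>) [Ed f])"
proof (cases \<eta>)
  case (Inl u)
  have "congK (wmono [Ed f]) (wmono [V u, Ed f] :: _ \<Rightarrow> 'k)"
    using rel_se[where p = "[]" and q = "[]" and e = f] assms Inl by (auto intro: congK_sym)
  then show ?thesis using sandwich_congK_r[of "[Ed f]" "[V u, Ed f]" "ghost_word \<mu>"] ghost_word_Gen[OF assms(1)] Inl
    by (simp add: sandwich_words rmul_rmul)
next
  case (Inr es)
  then show ?thesis by (simp add: sandwich_words rmul_rmul)
qed

lemma sandwich_corner: assumes "is_path E0 E1 r s \<mu>" "is_path E0 E1 r s \<eta>"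
  shows "congK (sandwich \<mu> \<eta>) (lmul [V (path_end \<mu>)] (rmul (sandwich \<mu> \<eta>) [V (path_end \<eta>)]))"
proof -
  have l: "congK (wmono (ghost_word \<mu>)) (wmono (V (path_end \<mu>) # ghost_word \<mu>) :: _ \<Rightarrow> 'k)"
  proof (cases \<mu>)
    case (Inl u) then show ?thesis using rel_vv[where p = "[]" and q = "[]" and x = u] assms by (auto intro: congK_sym)
  next
    case (Inr es)
    then obtain es' e where es: "es = es' @ [e]" using assms by (cases es rule: rev_cases) auto
    then show ?thesis using Inr rel_rg[where p = "[]" and q = "rev (map Gh es')" and e = e] assms by (auto intro: congK_sym)
  qed
  have rr: "congK (wmono (path_word \<eta>)) (wmono (path_word \<eta> @ [V (path_end \<eta>)]) :: _ \<Rightarrow> 'k)"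
  proof (cases \<eta>)
    case (Inl u) then show ?thesis using rel_vv[where p = "[]" and q = "[]" and x = u] assms by (auto intro: congK_sym)
  next
    case (Inr es)
    then obtain es' e where es: "es = es' @ [e]" using assms by (cases es rule: rev_cases) auto
    then show ?thesis using Inr rel_er[where p = "map Ed es'" and q = "[]" and e = e] assms by (auto intro: congK_sym)
  qed
  have "congK (sandwich \<mu> \<eta>) (rmul (lmul (V (path_end \<mu>) # ghost_word \<mu>) a) (path_word \<eta>))"
    unfolding sandwich_words by (rule sandwich_congK_l[OF l path_word_Gen[OF assms(2)]])
  also have "congK (rmul (lmul (V (path_end \<mu>) # ghost_word \<mu>) a) (path_word \<eta>)) (rmul (lmul (V (path_end \<mu>) # ghost_word \<mu>) a) (path_word \<eta> @ [V (path_end \<eta>)]))"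
    by (rule sandwich_congK_r[OF rr]) (use ghost_word_Gen[OF assms(1)] path_end_E0[OF assms(1)] in auto)
  finally show ?thesis by (simp add: sandwich_words lmul_rmul rmul_rmul lmul_lmul)
qed

end

lemma valid_poly_D: "valid_poly P \<Longrightarrow> (k, t) \<in> set P \<Longrightarrow> nm_valid t"
  unfolding valid_poly_def by blast

lemma act_l_deg: "act_l g t = Some t' \<Longrightarrow> nm_deg t' = nm_deg t + gdeg g"
proof (cases t)
  case (fields u as bs)
  assume "act_l g t = Some t'"
  then show ?thesis using fields by (cases g; cases as) (auto simp: nm_deg_def split: if_splits)
qed

lemma act_r_deg: "act_r g t = Some t' \<Longrightarrow> nm_deg t' = nm_deg t + gdeg g"
proof (cases t)
  case (fields u as bs)
  assume "act_r g t = Some t'"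
  then show ?thesis using fields by (cases g; cases bs) (auto simp: nm_deg_def split: if_splits)
qed

lemma valid_poly_act_l: "valid_poly P \<Longrightarrow> g \<in> Gen \<Longrightarrow> valid_poly (lift_terms (act_l g) P)"
  using valid_poly_lift_terms act_l_valid by metis
lemma valid_poly_act_r: "valid_poly P \<Longrightarrow> g \<in> Gen \<Longrightarrow> valid_poly (lift_terms (act_r g) P)"
  using valid_poly_lift_terms act_r_valid by metis
lemma hom_poly_act_l: "hom_poly n P \<Longrightarrow> hom_poly (n + gdeg g) (lift_terms (act_l g) P)"
  using hom_poly_lift_terms act_l_deg by metis
lemma hom_poly_act_r: "hom_poly n P \<Longrightarrow> hom_poly (n + gdeg g) (lift_terms (act_r g) P)"
  using hom_poly_lift_terms act_r_deg by metis

lemma poly_size_act_l_ghost_less: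
  assumes ne: "P \<noteq> []" and nas: "\<And>k u as bs. (k, (u, as, bs)) \<in> set P \<Longrightarrow> as \<noteq> []"
  shows "poly_size (lift_terms (act_l (Gh e)) P) < poly_size P"
proof -
  obtain k0 t0 where k0: "(k0, t0) \<in> set P" using ne by (cases P) auto
  show ?thesis
  proof (rule poly_size_lift_terms_less[OF _ k0])
    fix k t t' assume kt: "(k, t) \<in> set P" "act_l (Gh e) t = Some t'"
    obtain u as bs where t: "t = (u, as, bs)" by (cases t)
    obtain a1 as' where "as = a1 # as'" using nas kt(1) t by (cases as) auto
    then show "nm_size t' \<le> nm_size t \<and> (0 < nm_size t \<longrightarrow> nm_size t' < nm_size t)"
      using kt(2) t by (auto split: if_splits)
  next
    obtain u as bs where "t0 = (u, as, bs)" by (cases t0)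
    then show "0 < nm_size t0" using nas k0 by (cases as) auto
  qed
qed

lemma poly_size_act_r_edge_less:
  assumes ne: "P \<noteq> []" and nbs: "\<And>k u as bs. (k, (u, as, bs)) \<in> set P \<Longrightarrow> bs \<noteq> []"
  shows "poly_size (lift_terms (act_r (Ed e)) P) < poly_size P"
proof -
  obtain k0 t0 where k0: "(k0, t0) \<in> set P" using ne by (cases P) auto
  show ?thesis
  proof (rule poly_size_lift_terms_less[OF _ k0])
    fix k t t' assume kt: "(k, t) \<in> set P" "act_r (Ed e) t = Some t'"
    obtain u as bs where t: "t = (u, as, bs)" by (cases t)
    obtain b1 bs' where "bs = b1 # bs'" using nbs kt(1) t by (cases bs) auto
    then show "nm_size t' \<le> nm_size t \<and> (0 < nm_size t \<longrightarrow> nm_size t' < nm_size t)"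
      using kt(2) t by (auto split: if_splits)
  next
    obtain u as bs where "t0 = (u, as, bs)" by (cases t0)
    then show "0 < nm_size t0" using nbs k0 by (cases bs) auto
  qed
qed

lemma poly_size_ghost_edge_sandwich_less:
  assumes shape: "\<And>k t. (k, t) \<in> set P \<Longrightarrow> t = (v, [], []) \<or> (\<exists>u a1 as b1 bs. t = (u, a1 # as, b1 # bs))"
    and f: "s f = v" and k0: "(k0, t0) \<in> set P" "t0 \<noteq> (v, [], [])"
  shows "poly_size (lift_terms (act_l (Gh e)) (lift_terms (act_r (Ed f)) P)) < poly_size P"
  unfolding lift_terms_comp
proof (rule poly_size_lift_terms_less[OF _ k0(1)])
  fix k t t' assume kt: "(k, t) \<in> set P" "Option.bind (act_r (Ed f) t) (act_l (Gh e)) = Some t'"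
  show "nm_size t' \<le> nm_size t \<and> (0 < nm_size t \<longrightarrow> nm_size t' < nm_size t)"
  proof (cases "t = (v, [], [])")
    case True
    then show ?thesis using kt(2) f by (auto split: if_splits)
  next
    case False
    then obtain u a1 as b1 bs where "t = (u, a1 # as, b1 # bs)" using shape[OF kt(1)] by blast
    then show ?thesis using kt(2) by (auto split: if_splits)
  qed
next
  show "0 < nm_size t0" using shape[OF k0(1)] k0(2) by auto
qed

definition corner :: "'v \<Rightarrow> 'v \<Rightarrow> ('k \<times> ('v,'e) nmono) list \<Rightarrow> ('k \<times> ('v,'e) nmono) list" where
  "corner v w P = lift_terms (act_l (V v)) (lift_terms (act_r (V w)) P)"

definition in_corner :: "'v \<Rightarrow> 'v \<Rightarrow> ('v,'e) nmono \<Rightarrow> bool" where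
  "in_corner v w t \<longleftrightarrow> (case t of (u, as, bs) \<Rightarrow> start as u = v \<and> start bs u = w)"

lemma corner_filter: "corner v w P = filter (\<lambda>(k, t). in_corner v w t) P"
  unfolding corner_def lift_terms_comp
  by (rule lift_terms_filter) (auto simp: in_corner_def split: prod.splits)

lemma corner_props:
  assumes "valid_poly P" "hom_poly n P"
  shows "valid_poly (corner v w P)" "hom_poly n (corner v w P)" "poly_size (corner v w P) \<le> poly_size P"
    "\<And>k t. (k, t) \<in> set (corner v w P) \<Longrightarrow> in_corner v w t"
  using assms by (auto simp: corner_filter valid_poly_def hom_poly_def poly_size_filter)

lemma corner_congK: assumes "valid_poly P" "v \<in> E0" "w \<in> E0"
  shows "congK (lmul [V v] (rmul (eval_poly P) [V w])) (eval_poly (corner v w P) :: _ \<Rightarrow> 'k::field)"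
proof -
  have "congK (lmul [V v] (rmul (eval_poly P) [V w])) (lmul [V v] (eval_poly (lift_terms (act_r (V w)) P)) :: _ \<Rightarrow> 'k)"
    using congK_lmul[OF eval_poly_lift_terms_congK_R[OF assms(1), of "V w"]] assms by auto
  also have "congK (lmul [V v] (eval_poly (lift_terms (act_r (V w)) P))) (eval_poly (corner v w P) :: _ \<Rightarrow> 'k)"
    unfolding corner_def by (rule eval_poly_lift_terms_congK_L[OF valid_poly_act_r[OF assms(1)]]) (use assms in auto)
  finally show ?thesis .
qed

lemma act_l_ghost_edge: assumes "nm_valid (u, a # as, bs)"
  shows "Option.bind (act_l (Gh e) (u, a # as, bs)) (act_l (Ed e)) = (if e = a then Some (u, a # as, bs) else None)"
  using assms by (cases as) (auto simp: nm_valid.simps)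

lemma act_r_edge_ghost: assumes "nm_valid (u, as, b # bs)"
  shows "Option.bind (act_r (Ed f) (u, as, b # bs)) (act_r (Gh f)) = (if f = b then Some (u, as, b # bs) else None)"
  using assms by (cases bs) (auto simp: nm_valid.simps)

lemma sum_eval_opt_delta: "finite F \<Longrightarrow> a \<in> F \<Longrightarrow> sum (\<lambda>e. eval_opt (if e = a then Some t else None)) F = (wmono (nm_word t) :: _ \<Rightarrow> 'k::field)"
proof -
  assume "finite F" "a \<in> F"
  have "sum (\<lambda>e. eval_opt (if e = a then Some t else None)) F = sum (\<lambda>e. if e = a then (wmono (nm_word t) :: _ \<Rightarrow> 'k) else 0) F"
    by (rule sum.cong) auto
  then show ?thesis using \<open>finite F\<close> \<open>a \<in> F\<close> by (simp add: sum.delta')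
qed

lemma poly_decomp_left: assumes "valid_poly P" "finite F"
  "\<And>k u as bs. (k, (u, as, bs)) \<in> set P \<Longrightarrow> as \<noteq> [] \<and> hd as \<in> F"
  shows "eval_poly P = sum (\<lambda>e. eval_poly (lift_terms (act_l (Ed e)) (lift_terms (act_l (Gh e)) P))) (F :: 'e set)"
proof -
  have "sum (\<lambda>e. eval_poly (lift_terms (act_l (Ed e)) (lift_terms (act_l (Gh e)) P))) F
      = sum (\<lambda>e. evalh (\<lambda>t. eval_opt (Option.bind (act_l (Gh e) t) (act_l (Ed e)))) P) F"
    by (simp add: lift_terms_comp eval_poly_lift_terms)
  also have "\<dots> = evalh (\<lambda>t. sum (\<lambda>e. eval_opt (Option.bind (act_l (Gh e) t) (act_l (Ed e)))) F) P"
    by (rule evalh_sum[symmetric])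
  also have "\<dots> = evalh (\<lambda>t. wmono (nm_word t)) P"
  proof (rule evalh_cong)
    fix k t assume kt: "(k, t) \<in> set P"
    obtain u as bs where t: "t = (u, as, bs)" by (cases t)
    obtain a as' where as: "as = a # as'" "a \<in> F" using assms(3) kt t by (cases as) fastforce+
    have "nm_valid t" using valid_poly_D[OF assms(1) kt] .
    then have vt: "nm_valid (u, a # as', bs)" using t as by simp
    show "sum (\<lambda>e. eval_opt (Option.bind (act_l (Gh e) t) (act_l (Ed e)))) F = wmono (nm_word t)"
      unfolding t as(1) by (simp only: act_l_ghost_edge[OF vt] sum_eval_opt_delta[OF assms(2) as(2)])
  qed
  finally show ?thesis by (simp add: eval_poly_def)
qed

lemma poly_decomp_right: assumes "valid_poly P" "finite F"
  "\<And>k u as bs. (k, (u, as, bs)) \<in> set P \<Longrightarrow> bs \<noteq> [] \<and> hd bs \<in> F"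
  shows "eval_poly P = sum (\<lambda>f. eval_poly (lift_terms (act_r (Gh f)) (lift_terms (act_r (Ed f)) P))) (F :: 'e set)"
proof -
  have "sum (\<lambda>f. eval_poly (lift_terms (act_r (Gh f)) (lift_terms (act_r (Ed f)) P))) F
      = sum (\<lambda>f. evalh (\<lambda>t. eval_opt (Option.bind (act_r (Ed f) t) (act_r (Gh f)))) P) F"
    by (simp add: lift_terms_comp eval_poly_lift_terms)
  also have "\<dots> = evalh (\<lambda>t. sum (\<lambda>f. eval_opt (Option.bind (act_r (Ed f) t) (act_r (Gh f)))) F) P"
    by (rule evalh_sum[symmetric])
  also have "\<dots> = evalh (\<lambda>t. wmono (nm_word t)) P"
  proof (rule evalh_cong)
    fix k t assume kt: "(k, t) \<in> set P"
    obtain u as bs where t: "t = (u, as, bs)" by (cases t)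
    obtain b bs' where bs: "bs = b # bs'" "b \<in> F" using assms(3) kt t by (cases bs) fastforce+
    have "nm_valid t" using valid_poly_D[OF assms(1) kt] .
    then have vt: "nm_valid (u, as, b # bs')" using t bs by simp
    show "sum (\<lambda>f. eval_opt (Option.bind (act_r (Ed f) t) (act_r (Gh f)))) F = wmono (nm_word t)"
      unfolding t bs(1) by (simp only: act_r_edge_ghost[OF vt] sum_eval_opt_delta[OF assms(2) bs(2)])
  qed
  finally show ?thesis by (simp add: eval_poly_def)
qed

definition act_conj :: "'e \<Rightarrow> 'e \<Rightarrow> ('v,'e) nmono \<Rightarrow> ('v,'e) nmono option" where
  "act_conj e f t = Option.bind (Option.bind (Option.bind (act_r (Ed f) t) (act_r (Gh f))) (act_l (Gh e))) (act_l (Ed e))"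

definition conj_poly :: "'e \<Rightarrow> 'e \<Rightarrow> ('k \<times> ('v,'e) nmono) list \<Rightarrow> ('k \<times> ('v,'e) nmono) list" where
  "conj_poly e f P = lift_terms (act_l (Ed e)) (lift_terms (act_l (Gh e)) (lift_terms (act_r (Gh f)) (lift_terms (act_r (Ed f)) P)))"

lemma conj_poly_lift_terms: "conj_poly e f P = lift_terms (\<lambda>t. act_conj e f t) P"
  by (simp add: conj_poly_def act_conj_def lift_terms_comp)

lemma act_conj_nonvertex: assumes v: "nm_valid (u, a # as, b # bs)"
  shows "act_conj e f (u, a # as, b # bs) = (if e = a \<and> f = b then Some (u, a # as, b # bs) else None)"
  using v by (cases as; cases bs) (auto simp: act_conj_def nm_valid.simps)

lemma act_conj_vertex: assumes "f \<in> E1" "s f = v"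
  shows "act_conj e f (v, [], []) = (if e = f then Some (r e, [e], [e]) else None)"
  using assms by (auto simp: act_conj_def)

definition vertex_coeff :: "'v \<Rightarrow> ('k::field \<times> ('v,'e) nmono) list \<Rightarrow> 'k" where
  "vertex_coeff v P = sum_list (map (\<lambda>(k, t). if t = (v, [], []) then k else 0) P)"

lemma sum_sum_delta: "finite F \<Longrightarrow> a \<in> F \<Longrightarrow> b \<in> F \<Longrightarrow>
   sum (\<lambda>e. sum (\<lambda>f. eval_opt (if e = a \<and> f = b then Some t else None)) F) F = (wmono (nm_word t) :: _ \<Rightarrow> 'k::field)"
proof -
  assume fin: "finite F" and ab: "a \<in> F" "b \<in> F"
  have "sum (\<lambda>e. sum (\<lambda>f. eval_opt (if e = a \<and> f = b then Some t else None)) F) F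
      = sum (\<lambda>e. if e = a then (wmono (nm_word t) :: _ \<Rightarrow> 'k) else 0) F"
  proof (rule sum.cong)
    fix e assume "e \<in> F"
    show "sum (\<lambda>f. eval_opt (if e = a \<and> f = b then Some t else None)) F = (if e = a then wmono (nm_word t) else 0)"
    proof (cases "e = a")
      case True then show ?thesis using sum_eval_opt_delta[OF fin ab(2), of t] by simp
    qed simp
  qed simp
  then show ?thesis using fin ab by (simp add: sum.delta')
qed

lemma sum_sum_act_conj_vertex: "finite F \<Longrightarrow> F \<subseteq> {e \<in> E1. s e = v} \<Longrightarrow>
   sum (\<lambda>e. sum (\<lambda>f. eval_opt (act_conj e f (v, [], []))) F) F = (sum (\<lambda>e. wmono [Ed e, Gh e]) F :: _ \<Rightarrow> 'k::field)"
proof (rule sum.cong)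
  fix e assume fin: "finite F" and F: "F \<subseteq> {e \<in> E1. s e = v}" and e: "e \<in> F"
  have "sum (\<lambda>f. eval_opt (act_conj e f (v, [], []))) F = sum (\<lambda>f. eval_opt (if f = e then Some (r e, [e], [e]) else None)) F"
    by (rule sum.cong) (use F act_conj_vertex in auto)
  also have "\<dots> = (wmono (nm_word (r e, [e], [e])) :: _ \<Rightarrow> 'k)" by (rule sum_eval_opt_delta[OF fin e])
  finally show "sum (\<lambda>f. eval_opt (act_conj e f (v, [], []))) F = (wmono [Ed e, Gh e] :: _ \<Rightarrow> 'k)" by simp
qed simp

lemma poly_decomp_conj: assumes "valid_poly P" "finite F" "F \<subseteq> {e \<in> E1. s e = v}"
  "\<And>k t. (k, t) \<in> set P \<Longrightarrow> t = (v, [], []) \<or> (\<exists>u a as b bs. t = (u, a # as, b # bs) \<and> a \<in> F \<and> b \<in> F)"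
  shows "sum (\<lambda>e. sum (\<lambda>f. eval_poly (conj_poly e f P)) F) F
     = eval_poly P + smul (vertex_coeff v P) (sum (\<lambda>e. wmono [Ed e, Gh e]) F - wmono [V v] :: _ \<Rightarrow> 'k::field)"
proof -
  let ?H = "(sum (\<lambda>e. wmono [Ed e, Gh e]) F - wmono [V v] :: _ \<Rightarrow> 'k)"
  have "sum (\<lambda>e. sum (\<lambda>f. eval_poly (conj_poly e f P)) F) F = sum (\<lambda>e. sum (\<lambda>f. evalh (\<lambda>t. eval_opt (act_conj e f t)) P) F) F"
    by (simp add: conj_poly_lift_terms eval_poly_lift_terms)
  also have "\<dots> = sum (\<lambda>e. evalh (\<lambda>t. sum (\<lambda>f. eval_opt (act_conj e f t)) F) P) F"
    by (simp add: evalh_sum)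
  also have "\<dots> = evalh (\<lambda>t. sum (\<lambda>e. sum (\<lambda>f. eval_opt (act_conj e f t)) F) F) P"
    by (rule evalh_sum[symmetric])
  also have "\<dots> = evalh (\<lambda>t. wmono (nm_word t) + (if t = (v, [], []) then ?H else 0)) P"
  proof (rule evalh_cong)
    fix k t assume kt: "(k, t) \<in> set P"
    show "sum (\<lambda>e. sum (\<lambda>f. eval_opt (act_conj e f t)) F) F = wmono (nm_word t) + (if t = (v, [], []) then ?H else 0)"
    proof (cases "t = (v, [], [])")
      case True
      then show ?thesis using sum_sum_act_conj_vertex[OF assms(2,3)] by simp
    next
      case False
      then obtain u a as b bs where t: "t = (u, a # as, b # bs)" "a \<in> F" "b \<in> F" using assms(4)[OF kt] by blast
      have vt: "nm_valid (u, a # as, b # bs)" using valid_poly_D[OF assms(1) kt] t by simp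
      have "sum (\<lambda>e. sum (\<lambda>f. eval_opt (act_conj e f t)) F) F = wmono (nm_word t)"
        unfolding t(1) by (simp only: act_conj_nonvertex[OF vt] sum_sum_delta[OF assms(2) t(2,3)])
      then show ?thesis using False by simp
    qed
  qed
  also have "\<dots> = eval_poly P + evalh (\<lambda>t. if t = (v, [], []) then ?H else 0) P"
    by (simp only: evalh_add eval_poly_def)
  also have "\<dots> = eval_poly P + smul (vertex_coeff v P) ?H"
    by (simp only: evalh_point vertex_coeff_def)
  finally show ?thesis .
qed

lemma conj_poly_congK: assumes "valid_poly P" "e \<in> E1" "f \<in> E1"
  shows "congK (eval_poly (conj_poly e f P)) (lmul [Ed e] (lmul [Gh e] (rmul (rmul (eval_poly P) [Ed f]) [Gh f])) :: _ \<Rightarrow> 'k::field)"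
proof -
  let ?P1 = "lift_terms (act_r (Ed f)) P" let ?P2 = "lift_terms (act_r (Gh f)) ?P1" let ?P3 = "lift_terms (act_l (Gh e)) ?P2"
  have v1: "valid_poly ?P1" and v2: "valid_poly ?P2" and v3: "valid_poly ?P3"
    using assms by (auto intro!: valid_poly_act_r valid_poly_act_l)
  have "congK (lmul [Ed e] (lmul [Gh e] (rmul (rmul (eval_poly P) [Ed f]) [Gh f]))) (lmul [Ed e] (lmul [Gh e] (rmul (eval_poly ?P1) [Gh f])) :: _ \<Rightarrow> 'k)"
    using assms by (intro congK_lmul congK_rmul eval_poly_lift_terms_congK_R) auto
  also have "congK (lmul [Ed e] (lmul [Gh e] (rmul (eval_poly ?P1) [Gh f]))) (lmul [Ed e] (lmul [Gh e] (eval_poly ?P2)) :: _ \<Rightarrow> 'k)"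
    using assms v1 by (intro congK_lmul eval_poly_lift_terms_congK_R) auto
  also have "congK (lmul [Ed e] (lmul [Gh e] (eval_poly ?P2))) (lmul [Ed e] (eval_poly ?P3) :: _ \<Rightarrow> 'k)"
    using assms v2 by (intro congK_lmul eval_poly_lift_terms_congK_L) auto
  also have "congK (lmul [Ed e] (eval_poly ?P3)) (eval_poly (conj_poly e f P) :: _ \<Rightarrow> 'k)"
    unfolding conj_poly_def using assms v3 by (intro eval_poly_lift_terms_congK_L) auto
  finally show ?thesis by (rule congK_sym)
qed

lemma hom_poly_degree_zero:
  assumes hP: "hom_poly n P" and t1: "(k1, (u1, [], bs1)) \<in> set P" and t2: "(k2, (u2, as2, [])) \<in> set P"
  shows "n = 0" and "bs1 = []"
proof -
  have d1: "- int (length bs1) = n" using hP t1 unfolding hom_poly_def nm_deg_def by fastforce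
  have d2: "int (length as2) = n" using hP t2 unfolding hom_poly_def nm_deg_def by fastforce
  show "n = 0" using d1 d2 by linarith
  then show "bs1 = []" using d1 by simp
qed

lemma degree_zero_shape:
  assumes hP: "hom_poly 0 P" and loc: "in_corner v w t" and kt: "(k, t) \<in> set P"
  shows "t = (v, [], []) \<or> (\<exists>u a1 as b1 bs. t = (u, a1 # as, b1 # bs))"
proof -
  obtain u as bs where t: "t = (u, as, bs)" by (cases t)
  have "length as = length bs" using hP kt t unfolding hom_poly_def nm_deg_def by force
  moreover have "as = [] \<longrightarrow> u = v" using loc t unfolding in_corner_def by auto
  ultimately show ?thesis using t by (cases as; cases bs) auto
qed

lemma act_l_ghost_edge_congK: assumes "valid_poly P" "e \<in> E1"
  shows "congK (eval_poly (lift_terms (act_l (Ed e)) (lift_terms (act_l (Gh e)) P))) (lmul [Ed e] (lmul [Gh e] (eval_poly P)) :: _ \<Rightarrow> 'k::field)"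
proof -
  have "congK (lmul [Ed e] (lmul [Gh e] (eval_poly P))) (lmul [Ed e] (eval_poly (lift_terms (act_l (Gh e)) P)) :: _ \<Rightarrow> 'k)"
    using assms by (intro congK_lmul eval_poly_lift_terms_congK_L) auto
  also have "congK (lmul [Ed e] (eval_poly (lift_terms (act_l (Gh e)) P))) (eval_poly (lift_terms (act_l (Ed e)) (lift_terms (act_l (Gh e)) P)) :: _ \<Rightarrow> 'k)"
    using assms by (intro eval_poly_lift_terms_congK_L valid_poly_act_l) auto
  finally show ?thesis by (rule congK_sym)
qed

lemma act_r_edge_ghost_congK: assumes "valid_poly P" "f \<in> E1"
  shows "congK (eval_poly (lift_terms (act_r (Gh f)) (lift_terms (act_r (Ed f)) P))) (rmul (rmul (eval_poly P) [Ed f]) [Gh f] :: _ \<Rightarrow> 'k::field)"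
proof -
  have "congK (rmul (rmul (eval_poly P) [Ed f]) [Gh f]) (rmul (eval_poly (lift_terms (act_r (Ed f)) P)) [Gh f] :: _ \<Rightarrow> 'k)"
    using assms by (intro congK_rmul eval_poly_lift_terms_congK_R) auto
  also have "congK (rmul (eval_poly (lift_terms (act_r (Ed f)) P)) [Gh f]) (eval_poly (lift_terms (act_r (Gh f)) (lift_terms (act_r (Ed f)) P)) :: _ \<Rightarrow> 'k)"
    using assms by (intro eval_poly_lift_terms_congK_R valid_poly_act_r) auto
  finally show ?thesis by (rule congK_sym)
qed

section \<open>Reduction to a vertex or a gap element\<close>

lemma smul_notin_Ker: "x \<notin> Ker \<Longrightarrow> c \<noteq> 0 \<Longrightarrow> smul c x \<notin> Ker"
proof
  assume "x \<notin> Ker" "c \<noteq> 0" "smul c x \<in> Ker"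
  then have "smul (inverse c) (smul c x) \<in> Ker" by (rule_tac Ker_smul)
  then show False using \<open>x \<notin> Ker\<close> \<open>c \<noteq> 0\<close> by (simp add: smul_smul)
qed

lemma congK_Ker: "congK x y \<Longrightarrow> y \<in> Ker \<Longrightarrow> x \<in> Ker"
  unfolding congK_def using Ker_add by fastforce

lemma congK_vertex_minus_edges:
  assumes vP: "valid_poly P" and S: "finite S" "S \<subseteq> {e \<in> E1. s e = v}"
    and shape: "\<And>k t. (k, t) \<in> set P \<Longrightarrow>
      t = (v, [], []) \<or> (\<exists>u a1 as b1 bs. t = (u, a1 # as, b1 # bs) \<and> a1 \<in> S \<and> b1 \<in> S)"
    and xP: "congK x (eval_poly P)"
    and killed: "\<And>e f. e \<in> S \<Longrightarrow> f \<in> S \<Longrightarrow> lmul [Gh e] (rmul x [Ed f]) \<in> Ker"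
  shows "congK x (smul (vertex_coeff v P) (wmono [V v] - (\<Sum>e\<in>S. wmono [Ed e, Gh e])))"
proof -
  let ?GS = "\<Sum>e\<in>S. wmono [Ed e, Gh e] :: ('v,'e) gen list \<Rightarrow> 'k::field"
  have conj_Ker: "eval_poly (conj_poly e f P) \<in> Ker" if ef: "e \<in> S" "f \<in> S" for e f
  proof -
    have e1: "e \<in> E1" and f1: "f \<in> E1" using ef S(2) by auto
    have "congK (eval_poly (conj_poly e f P)) (lmul [Ed e] (lmul [Gh e] (rmul (rmul (eval_poly P) [Ed f]) [Gh f])))"
      by (rule conj_poly_congK[OF vP e1 f1])
    also have "congK \<dots> (lmul [Ed e] (lmul [Gh e] (rmul (rmul x [Ed f]) [Gh f])))"
      using e1 f1 by (intro congK_lmul congK_rmul congK_sym[OF xP]) auto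
    finally have "congK (eval_poly (conj_poly e f P)) (lmul [Ed e] (rmul (lmul [Gh e] (rmul x [Ed f])) [Gh f]))"
      by (simp add: lmul_rmul)
    moreover have "lmul [Ed e] (rmul (lmul [Gh e] (rmul x [Ed f])) [Gh f]) \<in> Ker"
      using Ker_lmul[OF Ker_rmul[OF killed[OF ef], of "[Gh f]"], of "[Ed e]"] e1 f1 by auto
    ultimately show ?thesis using congK_Ker by blast
  qed
  have "(\<Sum>e\<in>S. \<Sum>f\<in>S. eval_poly (conj_poly e f P)) \<in> Ker"
    using S(1) conj_Ker by (intro Ker_sum) auto
  then have "eval_poly P + smul (vertex_coeff v P) (?GS - wmono [V v]) \<in> Ker"
    by (simp only: poly_decomp_conj[OF vP S shape])
  moreover have "eval_poly P + smul (vertex_coeff v P) (?GS - wmono [V v])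
      = eval_poly P - smul (vertex_coeff v P) (wmono [V v] - ?GS)"
    by (simp add: smul_diff)
  ultimately have "congK (eval_poly P) (smul (vertex_coeff v P) (wmono [V v] - ?GS))"
    by (simp add: congK_def)
  then show ?thesis by (rule congK_trans[OF xP])
qed

definition reduces :: "(('v,'e) gen list \<Rightarrow> 'k::field) \<Rightarrow> bool" where
  "reduces a \<longleftrightarrow> (\<exists>\<mu> \<eta>. is_path E0 E1 r s \<mu> \<and> is_path E0 E1 r s \<eta> \<and>
           (let b = fmul (fmul (pth_star \<mu>) a) (pth \<eta>) in
              b \<notin> Ker \<and>
              (\<exists>k. k \<noteq> 0 \<and>
                 ((\<exists>u\<in>E0. fsub b (smul k (wmono [V u])) \<in> Ker) \<or>
                  (\<exists>v\<in>Reg E0 E1 s - X. fsub b (smul k (gap E1 s v)) \<in> Ker)))))"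

context
  fixes a :: "('v,'e) gen list \<Rightarrow> 'k::field"
  assumes fa: "finite {w. a w \<noteq> 0}" "\<And>w. a w \<noteq> 0 \<Longrightarrow> set w \<subseteq> Gen"
begin

lemma reduces_vertexI: assumes "is_path E0 E1 r s \<mu>" "is_path E0 E1 r s \<eta>" "sandwich a \<mu> \<eta> \<notin> Ker" "u \<in> E0"
  "congK (sandwich a \<mu> \<eta>) (smul k (wmono [V u]))"
  shows "reduces a"
proof -
  have "k \<noteq> 0"
  proof
    assume "k = 0"
    then have "sandwich a \<mu> \<eta> \<in> Ker" using assms(5) by (simp add: congK_def)
    then show False using assms(3) by simp
  qed
  then show ?thesis unfolding reduces_def using assms
    by (intro exI[of _ \<mu>] exI[of _ \<eta>]) (auto simp: Let_def sandwich_def[OF fa] fsub_eq congK_def)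
qed

lemma reduces_gapI: assumes "is_path E0 E1 r s \<mu>" "is_path E0 E1 r s \<eta>" "sandwich a \<mu> \<eta> \<notin> Ker" "v \<in> Reg E0 E1 s - X"
  "congK (sandwich a \<mu> \<eta>) (smul k (gap E1 s v))"
  shows "reduces a"
proof -
  have "k \<noteq> 0"
  proof
    assume "k = 0"
    then have "sandwich a \<mu> \<eta> \<in> Ker" using assms(5) by (simp add: congK_def)
    then show False using assms(3) by simp
  qed
  then show ?thesis unfolding reduces_def using assms
    by (intro exI[of _ \<mu>] exI[of _ \<eta>]) (auto simp: Let_def sandwich_def[OF fa] fsub_eq congK_def)
qed

lemma reduce_left:
  assumes IH: "\<And>\<mu>' \<eta>' P' n'. poly_size P' < poly_size P \<Longrightarrow> is_path E0 E1 r s \<mu>' \<Longrightarrow> is_path E0 E1 r s \<eta>' \<Longrightarrow>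
      valid_poly P' \<Longrightarrow> hom_poly n' P' \<Longrightarrow> sandwich a \<mu>' \<eta>' \<notin> Ker \<Longrightarrow> congK (sandwich a \<mu>' \<eta>') (eval_poly P') \<Longrightarrow> reduces a"
  and pm: "is_path E0 E1 r s \<mu>" and pe: "is_path E0 E1 r s \<eta>" and vP: "valid_poly P" and hP: "hom_poly n P"
  and Bn: "sandwich a \<mu> \<eta> \<notin> Ker" and Bc: "congK (sandwich a \<mu> \<eta>) (eval_poly P)"
  and loc: "\<And>k t. (k, t) \<in> set P \<Longrightarrow> in_corner (path_end \<mu>) (path_end \<eta>) t"
  and ne: "P \<noteq> []"
  and nas: "\<And>k u as bs. (k, (u, as, bs)) \<in> set P \<Longrightarrow> as \<noteq> []"
  shows "reduces a"
proof -
  define F where "F = (\<lambda>(k, (u, as, bs)). hd as) ` set P"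
  have finF: "finite F" unfolding F_def by simp
  have heads: "as \<noteq> [] \<and> hd as \<in> F" if "(k, (u, as, bs)) \<in> set P" for k u as bs
    using nas[OF that] that unfolding F_def by force
  have FE: "e \<in> E1 \<and> s e = path_end \<mu>" if eF: "e \<in> F" for e
  proof -
    obtain x where x: "x \<in> set P" "e = (\<lambda>(k, (u, as, bs)). hd as) x" using eF unfolding F_def by blast
    obtain k u as bs where xx: "x = (k, u, as, bs)" by (metis prod.collapse)
    have kt: "(k, (u, as, bs)) \<in> set P" "e = hd as" using x xx by auto
    have "as \<noteq> []" using nas kt by blast
    moreover have "nm_valid (u, as, bs)" using valid_poly_D[OF vP kt(1)] .
    moreover have "in_corner (path_end \<mu>) (path_end \<eta>) (u, as, bs)" using loc kt(1) .
    ultimately show ?thesis using kt(2) by (cases as) (auto simp: nm_valid.simps in_corner_def)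
  qed
  have dec: "eval_poly P = sum (\<lambda>e. eval_poly (lift_terms (act_l (Ed e)) (lift_terms (act_l (Gh e)) P))) F"
    by (rule poly_decomp_left[OF vP finF]) (use heads in blast)
  have "\<exists>e\<in>F. lmul [Gh e] (sandwich a \<mu> \<eta>) \<notin> Ker"
  proof (rule ccontr)
    assume "\<not> (\<exists>e\<in>F. lmul [Gh e] (sandwich a \<mu> \<eta>) \<notin> Ker)"
    then have all: "lmul [Gh e] (sandwich a \<mu> \<eta>) \<in> Ker" if "e \<in> F" for e using that by blast
    have "eval_poly (lift_terms (act_l (Ed e)) (lift_terms (act_l (Gh e)) P)) \<in> Ker" if eF: "e \<in> F" for e
    proof -
      have e1: "e \<in> E1" using FE[OF eF] by simp
      have "congK (eval_poly (lift_terms (act_l (Ed e)) (lift_terms (act_l (Gh e)) P))) (lmul [Ed e] (lmul [Gh e] (eval_poly P)))"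
        by (rule act_l_ghost_edge_congK[OF vP e1])
      also have "congK (lmul [Ed e] (lmul [Gh e] (eval_poly P))) (lmul [Ed e] (lmul [Gh e] (sandwich a \<mu> \<eta>)))"
        using e1 by (intro congK_lmul congK_sym[OF Bc]) auto
      finally show ?thesis using Ker_lmul[OF all[OF eF], of "[Ed e]"] e1 congK_Ker by auto
    qed
    then have "eval_poly P \<in> Ker" unfolding dec using finF by (intro Ker_sum) auto
    then have "sandwich a \<mu> \<eta> \<in> Ker" using congK_Ker[OF Bc] by blast
    then show False using Bn by simp
  qed
  then obtain e where eF: "e \<in> F" and en: "lmul [Gh e] (sandwich a \<mu> \<eta>) \<notin> Ker" by blast
  have e1: "e \<in> E1" and se: "s e = path_end \<mu>" using FE[OF eF] by auto
  define \<mu>' where "\<mu>' = path_snoc \<mu> e"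
  have pm': "is_path E0 E1 r s \<mu>'" using path_snoc_path[OF pm e1 se] \<mu>'_def by simp
  define P' where "P' = lift_terms (act_l (Gh e)) P"
  have c1: "congK (sandwich a \<mu>' \<eta>) (lmul [Gh e] (sandwich a \<mu> \<eta>))" unfolding \<mu>'_def by (rule sandwich_extend_l[OF fa pm pe e1 se])
  have c2: "congK (sandwich a \<mu>' \<eta>) (eval_poly P')"
  proof -
    note c1
    also have "congK (lmul [Gh e] (sandwich a \<mu> \<eta>)) (lmul [Gh e] (eval_poly P))" using Bc e1 by (intro congK_lmul) auto
    also have "congK (lmul [Gh e] (eval_poly P)) (eval_poly P')" unfolding P'_def using vP e1 by (intro eval_poly_lift_terms_congK_L) auto
    finally show ?thesis .
  qed
  have Bn': "sandwich a \<mu>' \<eta> \<notin> Ker" using congK_notin_Ker[OF congK_sym[OF c1] en] .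
  have vP': "valid_poly P'" unfolding P'_def using vP e1 by (intro valid_poly_act_l) auto
  have hP': "hom_poly (n + gdeg (Gh e :: ('v,'e) gen)) P'" unfolding P'_def by (rule hom_poly_act_l[OF hP])
  have m: "poly_size P' < poly_size P"
    unfolding P'_def by (rule poly_size_act_l_ghost_less[OF ne nas])
  show ?thesis by (rule IH[OF m pm' pe vP' hP' Bn' c2])
qed

lemma reduce_right:
  assumes IH: "\<And>\<mu>' \<eta>' P' n'. poly_size P' < poly_size P \<Longrightarrow> is_path E0 E1 r s \<mu>' \<Longrightarrow> is_path E0 E1 r s \<eta>' \<Longrightarrow>
      valid_poly P' \<Longrightarrow> hom_poly n' P' \<Longrightarrow> sandwich a \<mu>' \<eta>' \<notin> Ker \<Longrightarrow> congK (sandwich a \<mu>' \<eta>') (eval_poly P') \<Longrightarrow> reduces a"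
  and pm: "is_path E0 E1 r s \<mu>" and pe: "is_path E0 E1 r s \<eta>" and vP: "valid_poly P" and hP: "hom_poly n P"
  and Bn: "sandwich a \<mu> \<eta> \<notin> Ker" and Bc: "congK (sandwich a \<mu> \<eta>) (eval_poly P)"
  and loc: "\<And>k t. (k, t) \<in> set P \<Longrightarrow> in_corner (path_end \<mu>) (path_end \<eta>) t"
  and ne: "P \<noteq> []"
  and nbs: "\<And>k u as bs. (k, (u, as, bs)) \<in> set P \<Longrightarrow> bs \<noteq> []"
  shows "reduces a"
proof -
  define F where "F = (\<lambda>(k, (u, as, bs)). hd bs) ` set P"
  have finF: "finite F" unfolding F_def by simp
  have heads: "bs \<noteq> [] \<and> hd bs \<in> F" if "(k, (u, as, bs)) \<in> set P" for k u as bs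
    using nbs[OF that] that unfolding F_def by force
  have FE: "e \<in> E1 \<and> s e = path_end \<eta>" if eF: "e \<in> F" for e
  proof -
    obtain x where x: "x \<in> set P" "e = (\<lambda>(k, (u, as, bs)). hd bs) x" using eF unfolding F_def by blast
    obtain k u as bs where xx: "x = (k, u, as, bs)" by (metis prod.collapse)
    have kt: "(k, (u, as, bs)) \<in> set P" "e = hd bs" using x xx by auto
    have "bs \<noteq> []" using nbs kt by blast
    moreover have "nm_valid (u, as, bs)" using valid_poly_D[OF vP kt(1)] .
    moreover have "in_corner (path_end \<mu>) (path_end \<eta>) (u, as, bs)" using loc kt(1) .
    ultimately show ?thesis using kt(2) by (cases bs) (auto simp: nm_valid.simps in_corner_def)
  qed
  have dec: "eval_poly P = sum (\<lambda>f. eval_poly (lift_terms (act_r (Gh f)) (lift_terms (act_r (Ed f)) P))) F"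
    by (rule poly_decomp_right[OF vP finF]) (use heads in blast)
  have "\<exists>e\<in>F. rmul (sandwich a \<mu> \<eta>) [Ed e] \<notin> Ker"
  proof (rule ccontr)
    assume "\<not> (\<exists>e\<in>F. rmul (sandwich a \<mu> \<eta>) [Ed e] \<notin> Ker)"
    then have all: "rmul (sandwich a \<mu> \<eta>) [Ed e] \<in> Ker" if "e \<in> F" for e using that by blast
    have "eval_poly (lift_terms (act_r (Gh e)) (lift_terms (act_r (Ed e)) P)) \<in> Ker" if eF: "e \<in> F" for e
    proof -
      have e1: "e \<in> E1" using FE[OF eF] by simp
      have "congK (eval_poly (lift_terms (act_r (Gh e)) (lift_terms (act_r (Ed e)) P))) (rmul (rmul (eval_poly P) [Ed e]) [Gh e])"
        by (rule act_r_edge_ghost_congK[OF vP e1])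
      also have "congK (rmul (rmul (eval_poly P) [Ed e]) [Gh e]) (rmul (rmul (sandwich a \<mu> \<eta>) [Ed e]) [Gh e])"
        using e1 by (intro congK_rmul congK_sym[OF Bc]) auto
      finally show ?thesis using Ker_rmul[OF all[OF eF], of "[Gh e]"] e1 congK_Ker by auto
    qed
    then have "eval_poly P \<in> Ker" unfolding dec using finF by (intro Ker_sum) auto
    then have "sandwich a \<mu> \<eta> \<in> Ker" using congK_Ker[OF Bc] by blast
    then show False using Bn by simp
  qed
  then obtain e where eF: "e \<in> F" and en: "rmul (sandwich a \<mu> \<eta>) [Ed e] \<notin> Ker" by blast
  have e1: "e \<in> E1" and se: "s e = path_end \<eta>" using FE[OF eF] by auto
  define \<eta>' where "\<eta>' = path_snoc \<eta> e"
  have pe': "is_path E0 E1 r s \<eta>'" using path_snoc_path[OF pe e1 se] \<eta>'_def by simp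
  define P' where "P' = lift_terms (act_r (Ed e)) P"
  have c1: "congK (sandwich a \<mu> \<eta>') (rmul (sandwich a \<mu> \<eta>) [Ed e])" unfolding \<eta>'_def by (rule sandwich_extend_r[OF fa pm pe e1 se])
  have c2: "congK (sandwich a \<mu> \<eta>') (eval_poly P')"
  proof -
    note c1
    also have "congK (rmul (sandwich a \<mu> \<eta>) [Ed e]) (rmul (eval_poly P) [Ed e])" using Bc e1 by (intro congK_rmul) auto
    also have "congK (rmul (eval_poly P) [Ed e]) (eval_poly P')" unfolding P'_def using vP e1 by (intro eval_poly_lift_terms_congK_R) auto
    finally show ?thesis .
  qed
  have Bn': "sandwich a \<mu> \<eta>' \<notin> Ker" using congK_notin_Ker[OF congK_sym[OF c1] en] .
  have vP': "valid_poly P'" unfolding P'_def using vP e1 by (intro valid_poly_act_r) auto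
  have hP': "hom_poly (n + gdeg (Ed e :: ('v,'e) gen)) P'" unfolding P'_def by (rule hom_poly_act_r[OF hP])
  have m: "poly_size P' < poly_size P"
    unfolding P'_def by (rule poly_size_act_r_edge_less[OF ne nbs])
  show ?thesis by (rule IH[OF m pm pe' vP' hP' Bn' c2])
qed

end

context
  fixes a :: "('v,'e) gen list \<Rightarrow> 'k::field"
  assumes fa: "finite {w. a w \<noteq> 0}" "\<And>w. a w \<noteq> 0 \<Longrightarrow> set w \<subseteq> Gen"
begin

lemma sandwich_extend_both: assumes pm: "is_path E0 E1 r s \<mu>" and pe: "is_path E0 E1 r s \<eta>"
  and e1: "e \<in> E1" "s e = path_end \<mu>" and f1: "f \<in> E1" "s f = path_end \<eta>"
  shows "is_path E0 E1 r s (path_snoc \<mu> e)" "is_path E0 E1 r s (path_snoc \<eta> f)"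
    "congK (sandwich a (path_snoc \<mu> e) (path_snoc \<eta> f)) (lmul [Gh e] (rmul (sandwich a \<mu> \<eta>) [Ed f]))"
proof -
  show pm': "is_path E0 E1 r s (path_snoc \<mu> e)" using path_snoc_path[OF pm e1] by simp
  show pe': "is_path E0 E1 r s (path_snoc \<eta> f)" using path_snoc_path[OF pe f1] by simp
  have "congK (sandwich a (path_snoc \<mu> e) (path_snoc \<eta> f)) (lmul [Gh e] (sandwich a \<mu> (path_snoc \<eta> f)))"
    by (rule sandwich_extend_l[OF fa pm pe' e1])
  also have "congK (lmul [Gh e] (sandwich a \<mu> (path_snoc \<eta> f))) (lmul [Gh e] (rmul (sandwich a \<mu> \<eta>) [Ed f]))"
    using sandwich_extend_r[OF fa pm pe f1] e1 by (intro congK_lmul) auto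
  finally show "congK (sandwich a (path_snoc \<mu> e) (path_snoc \<eta> f)) (lmul [Gh e] (rmul (sandwich a \<mu> \<eta>) [Ed f]))" .
qed

lemma reduces_vertex_minus_edges:
  assumes pm: "is_path E0 E1 r s \<mu>" and pe: "is_path E0 E1 r s \<eta>"
    and ends: "path_end \<mu> = v" "path_end \<eta> = v"
    and S: "finite S" "S \<subseteq> {e \<in> E1. s e = v}"
    and Bn: "sandwich a \<mu> \<eta> \<notin> Ker"
    and Bc: "congK (sandwich a \<mu> \<eta>) (smul c (wmono [V v] - (\<Sum>e\<in>S. wmono [Ed e, Gh e])))"
  shows "reduces a"
proof -
  let ?GS = "\<Sum>e\<in>S. wmono [Ed e, Gh e] :: ('v,'e) gen list \<Rightarrow> 'k"
  have vE0: "v \<in> E0" using path_end_E0[OF pm] ends(1) by simp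
  have cn: "c \<noteq> 0"
  proof
    assume "c = 0" then show False using Bc Bn by (simp add: congK_def)
  qed
  show ?thesis
  proof (cases "S = {e \<in> E1. s e = v}")
    case all: True
    show ?thesis
    proof (cases "S = {}")
      case True
      then show ?thesis using reduces_vertexI[OF fa pm pe Bn vE0] Bc by simp
    next
      case False
      have "v \<notin> X"
      proof
        assume "v \<in> X"
        then have "congK (wmono [V v]) ?GS" using rel_gap[of v "[]" "[]"] all by simp
        then have "smul c (wmono [V v] - ?GS) \<in> Ker" by (intro Ker_smul) (simp add: congK_def)
        then show False using Bc Bn congK_Ker by blast
      qed
      then have vY: "v \<in> Reg E0 E1 s - X" using vE0 S(1) False all unfolding Reg_def by auto
      have "wmono [V v] - ?GS = gap E1 s v" unfolding gap_def using all by (simp add: fsub_eq fsum_eq)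
      then show ?thesis using reduces_gapI[OF fa pm pe Bn vY] Bc by simp
    qed
  next
    case False
    then obtain g where g: "g \<in> E1" "s g = v" "g \<notin> S" using S(2) by blast
    have g1: "s g = path_end \<mu>" "s g = path_end \<eta>" using g ends by auto
    note snoc = sandwich_extend_both[OF pm pe g(1) g1(1) g(1) g1(2)]
    \<comment> \<open>the edge \<open>g\<close> outside \<open>S\<close> turns \<open>v - \<Sum>e\<in>S. e e\<^sup>*\<close> into \<open>g\<^sup>* v g = r g\<close>\<close>
    have "congK (sandwich a (path_snoc \<mu> g) (path_snoc \<eta> g)) (lmul [Gh g] (rmul (sandwich a \<mu> \<eta>) [Ed g]))"
      by (rule snoc(3))
    also have "congK (lmul [Gh g] (rmul (sandwich a \<mu> \<eta>) [Ed g]))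
        (lmul [Gh g] (rmul (smul c (wmono [V v] - ?GS)) [Ed g]))"
      using Bc g by (intro congK_lmul congK_rmul) auto
    also have "lmul [Gh g] (rmul (smul c (wmono [V v] - ?GS)) [Ed g])
        = smul c (wmono [Gh g, V v, Ed g] - (\<Sum>e\<in>S. wmono [Gh g, Ed e, Gh e, Ed g]))"
      by (simp add: lmul_smul rmul_smul lmul_diff rmul_diff lmul_sum rmul_sum lmul_wmono rmul_wmono)
    also have "congK \<dots> (smul c (wmono [V (r g)] - (\<Sum>e\<in>S. 0)))"
    proof (intro congK_smul congK_diff congK_sum)
      have "congK (wmono [Gh g, V v, Ed g]) (wmono [Gh g, Ed g] :: _ \<Rightarrow> 'k)"
        using rel_gs[where p = "[]" and q = "[Ed g]" and e = g] g by auto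
      also have "congK (wmono [Gh g, Ed g]) (wmono [V (r g)] :: _ \<Rightarrow> 'k)"
        using rel_gee[where p = "[]" and q = "[]" and e = g] g by auto
      finally show "congK (wmono [Gh g, V v, Ed g]) (wmono [V (r g)] :: _ \<Rightarrow> 'k)" .
    next
      fix e assume "e \<in> S"
      then have "e \<in> E1" "g \<noteq> e" using S(2) g by auto
      then show "congK (wmono [Gh g, Ed e, Gh e, Ed g]) (0 :: _ \<Rightarrow> 'k)"
        using rel_gef[where p = "[]" and q = "[Gh e, Ed g]" and e = g and f = e] g by auto
    qed
    finally have cB: "congK (sandwich a (path_snoc \<mu> g) (path_snoc \<eta> g)) (smul c (wmono [V (r g)]))"
      by simp
    have "smul c (wmono [V (r g)]) \<notin> Ker"
      using smul_notin_Ker[OF vertex_notin_Ker cn] g by auto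
    then have Bn': "sandwich a (path_snoc \<mu> g) (path_snoc \<eta> g) \<notin> Ker"
      using congK_notin_Ker[OF congK_sym[OF cB]] by blast
    show ?thesis using reduces_vertexI[OF fa snoc(1) snoc(2) Bn' re_E0[OF g(1)] cB] .
  qed
qed

lemma reduce_degree_zero:
  assumes IH: "\<And>\<mu>' \<eta>' P' n'. poly_size P' < poly_size P \<Longrightarrow> is_path E0 E1 r s \<mu>' \<Longrightarrow> is_path E0 E1 r s \<eta>' \<Longrightarrow>
      valid_poly P' \<Longrightarrow> hom_poly n' P' \<Longrightarrow> sandwich a \<mu>' \<eta>' \<notin> Ker \<Longrightarrow> congK (sandwich a \<mu>' \<eta>') (eval_poly P') \<Longrightarrow> reduces a"
  and pm: "is_path E0 E1 r s \<mu>" and pe: "is_path E0 E1 r s \<eta>" and vP: "valid_poly P" and hP: "hom_poly n P"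
  and Bn: "sandwich a \<mu> \<eta> \<notin> Ker" and Bc: "congK (sandwich a \<mu> \<eta>) (eval_poly P)"
  and loc: "\<And>k t. (k, t) \<in> set P \<Longrightarrow> in_corner (path_end \<mu>) (path_end \<eta>) t"
  and t1: "(k1, (u1, [], bs1)) \<in> set P" and t2: "(k2, (u2, as2, [])) \<in> set P"
  shows "reduces a"
proof -
  define v where "v = path_end \<mu>"
  have vE0: "v \<in> E0" unfolding v_def by (rule path_end_E0[OF pm])
  have n0: "n = 0" and "bs1 = []" using hom_poly_degree_zero[OF hP t1 t2] by auto
  then have vw: "path_end \<eta> = v" using loc[OF t1] unfolding v_def in_corner_def by auto
  have shape0: "t = (v, [], []) \<or> (\<exists>u a1 as b1 bs. t = (u, a1 # as, b1 # bs))" if kt: "(k, t) \<in> set P" for k t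
    using degree_zero_shape[OF hP[unfolded n0] loc[OF kt] kt] by (simp only: v_def)
  define F where "F = {e. \<exists>k u a1 as b1 bs. (k, (u, a1 # as, b1 # bs)) \<in> set P \<and> (e = a1 \<or> e = b1)}"
  have finF: "finite F"
  proof (rule finite_subset)
    show "F \<subseteq> (\<lambda>(k, (u, as, bs)). hd as) ` set P \<union> (\<lambda>(k, (u, as, bs)). hd bs) ` set P"
      unfolding F_def by (auto simp: image_iff) (metis list.sel(1) case_prod_conv)+
  qed simp
  have FS: "F \<subseteq> {e \<in> E1. s e = v}"
  proof
    fix e assume "e \<in> F"
    then obtain k u a1 as b1 bs where kt: "(k, (u, a1 # as, b1 # bs)) \<in> set P" "e = a1 \<or> e = b1"
      unfolding F_def by blast
    have "nm_valid (u, a1 # as, b1 # bs)" by (rule valid_poly_D[OF vP kt(1)])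
    moreover have "in_corner v v (u, a1 # as, b1 # bs)" using loc[OF kt(1)] vw v_def by simp
    ultimately show "e \<in> {e \<in> E1. s e = v}" using kt(2) by (auto simp: nm_valid.simps in_corner_def)
  qed
  show ?thesis
  proof (cases "\<forall>k t. (k, t) \<in> set P \<longrightarrow> t = (v, [], [])")
    case True
    have "eval_poly P = evalh (\<lambda>t. if t = (v, [], []) then wmono [V v] else 0) P"
      unfolding eval_poly_def by (rule evalh_cong) (use True in auto)
    also have "\<dots> = smul (vertex_coeff v P) (wmono [V v])" by (simp only: evalh_point vertex_coeff_def)
    finally show ?thesis using reduces_vertexI[OF fa pm pe Bn vE0] Bc by simp
  next
    case False
    then obtain k0 t0 where k0: "(k0, t0) \<in> set P" "t0 \<noteq> (v, [], [])" by blast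
    have shape: "t = (v, [], []) \<or> (\<exists>u a1 as b1 bs. t = (u, a1 # as, b1 # bs) \<and> a1 \<in> F \<and> b1 \<in> F)"
      if kt: "(k, t) \<in> set P" for k t
      using shape0[OF kt] kt unfolding F_def by blast
    define c where "c = vertex_coeff v P"
    define GS where "GS = (sum (\<lambda>e. wmono [Ed e, Gh e]) F :: ('v,'e) gen list \<Rightarrow> 'k)"
    show ?thesis
    proof (cases "\<exists>e\<in>F. \<exists>f\<in>F. lmul [Gh e] (rmul (sandwich a \<mu> \<eta>) [Ed f]) \<notin> Ker")
      case True
      then obtain e f where ef: "e \<in> F" "f \<in> F" and en: "lmul [Gh e] (rmul (sandwich a \<mu> \<eta>) [Ed f]) \<notin> Ker" by blast
      have e1: "e \<in> E1" "s e = path_end \<mu>" and f1: "f \<in> E1" "s f = path_end \<eta>"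
        using ef FS vw v_def by auto
      note snoc = sandwich_extend_both[OF pm pe e1 f1]
      define P' where "P' = lift_terms (act_l (Gh e)) (lift_terms (act_r (Ed f)) P)"
      have c2: "congK (sandwich a (path_snoc \<mu> e) (path_snoc \<eta> f)) (eval_poly P')"
      proof -
        note snoc(3)
        also have "congK (lmul [Gh e] (rmul (sandwich a \<mu> \<eta>) [Ed f])) (lmul [Gh e] (rmul (eval_poly P) [Ed f]))"
          using Bc e1 f1 by (intro congK_lmul congK_rmul) auto
        also have "congK (lmul [Gh e] (rmul (eval_poly P) [Ed f])) (lmul [Gh e] (eval_poly (lift_terms (act_r (Ed f)) P)))"
          using vP e1 f1 by (intro congK_lmul eval_poly_lift_terms_congK_R) auto
        also have "congK (lmul [Gh e] (eval_poly (lift_terms (act_r (Ed f)) P))) (eval_poly P')"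
          unfolding P'_def using vP e1 f1 by (intro eval_poly_lift_terms_congK_L valid_poly_act_r) auto
        finally show ?thesis .
      qed
      have Bn': "sandwich a (path_snoc \<mu> e) (path_snoc \<eta> f) \<notin> Ker" using congK_notin_Ker[OF congK_sym[OF snoc(3)] en] .
      have vP': "valid_poly P'" unfolding P'_def using vP e1 f1 by (intro valid_poly_act_r valid_poly_act_l) auto
      have hP': "hom_poly (n + gdeg (Ed f :: ('v,'e) gen) + gdeg (Gh e :: ('v,'e) gen)) P'"
        unfolding P'_def by (rule hom_poly_act_l[OF hom_poly_act_r[OF hP]])
      have m: "poly_size P' < poly_size P"
        unfolding P'_def using f1 vw by (intro poly_size_ghost_edge_sandwich_less[OF shape0 _ k0]) auto
      show ?thesis by (rule IH[OF m snoc(1) snoc(2) vP' hP' Bn' c2])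
    next
      case False
      then have killed: "lmul [Gh e] (rmul (sandwich a \<mu> \<eta>) [Ed f]) \<in> Ker" if "e \<in> F" "f \<in> F" for e f
        using that by blast
      have Bc2: "congK (sandwich a \<mu> \<eta>) (smul c (wmono [V v] - GS))"
        unfolding c_def GS_def by (rule congK_vertex_minus_edges[OF vP finF FS shape Bc killed])
      show ?thesis
        using reduces_vertex_minus_edges[OF pm pe v_def[symmetric] vw finF FS Bn] Bc2
        unfolding GS_def by blast
    qed
  qed
qed

end

context
  fixes a :: "('v,'e) gen list \<Rightarrow> 'k::field"
  assumes fa: "finite {w. a w \<noteq> 0}" "\<And>w. a w \<noteq> 0 \<Longrightarrow> set w \<subseteq> Gen"
begin

lemma reduces_induct: "poly_size P \<le> m \<Longrightarrow> is_path E0 E1 r s \<mu> \<Longrightarrow> is_path E0 E1 r s \<eta> \<Longrightarrow> valid_poly P \<Longrightarrow> hom_poly n P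
   \<Longrightarrow> sandwich a \<mu> \<eta> \<notin> Ker \<Longrightarrow> congK (sandwich a \<mu> \<eta>) (eval_poly P) \<Longrightarrow> reduces a"
proof (induction m arbitrary: \<mu> \<eta> P n rule: less_induct)
  case (less m)
  note pm = less.prems(2) and pe = less.prems(3) and vP = less.prems(4) and hP = less.prems(5)
    and Bn = less.prems(6) and Bc = less.prems(7)
  define v where "v = path_end \<mu>"
  define w where "w = path_end \<eta>"
  have vE: "v \<in> E0" "w \<in> E0" using path_end_E0 pm pe v_def w_def by auto
  define P0 where "P0 = corner v w P"
  note props = corner_props[OF vP hP, where v = v and w = w, folded P0_def]
  have Bc0: "congK (sandwich a \<mu> \<eta>) (eval_poly P0)"
  proof -
    have "congK (sandwich a \<mu> \<eta>) (lmul [V v] (rmul (sandwich a \<mu> \<eta>) [V w]))"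
      unfolding v_def w_def by (rule sandwich_corner[OF fa pm pe])
    also have "congK (lmul [V v] (rmul (sandwich a \<mu> \<eta>) [V w])) (lmul [V v] (rmul (eval_poly P) [V w]))"
      using Bc vE by (intro congK_lmul congK_rmul) auto
    also have "congK (lmul [V v] (rmul (eval_poly P) [V w])) (eval_poly P0)"
      unfolding P0_def by (rule corner_congK[OF vP vE])
    finally show ?thesis .
  qed
  have ne: "P0 \<noteq> []"
  proof
    assume "P0 = []"
    then have "sandwich a \<mu> \<eta> \<in> Ker" using Bc0 by (simp add: congK_def)
    then show False using Bn by simp
  qed
  have IH0: "reduces a" if "poly_size P' < poly_size P0" "is_path E0 E1 r s \<mu>'" "is_path E0 E1 r s \<eta>'"
      "valid_poly P'" "hom_poly n' P'" "sandwich a \<mu>' \<eta>' \<notin> Ker" "congK (sandwich a \<mu>' \<eta>') (eval_poly P')" for \<mu>' \<eta>' P' n'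
  proof -
    have "poly_size P' < m" using that(1) props(3) less.prems(1) by linarith
    then show ?thesis using less.IH[OF _ order.refl that(2-7)] by blast
  qed
  have loc: "\<And>k t. (k, t) \<in> set P0 \<Longrightarrow> in_corner (path_end \<mu>) (path_end \<eta>) t" using props(4) v_def w_def by blast
  show ?case
  proof (cases "\<forall>k u as bs. (k, (u, as, bs)) \<in> set P0 \<longrightarrow> as \<noteq> []")
    case True
    show ?thesis by (rule reduce_left[OF fa IH0 pm pe props(1) props(2) Bn Bc0 loc ne]) (use True in blast)+
  next
    case F1: False
    then obtain k1 u1 bs1 where t1: "(k1, (u1, [], bs1)) \<in> set P0" by blast
    show ?thesis
    proof (cases "\<forall>k u as bs. (k, (u, as, bs)) \<in> set P0 \<longrightarrow> bs \<noteq> []")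
      case True
      show ?thesis by (rule reduce_right[OF fa IH0 pm pe props(1) props(2) Bn Bc0 loc ne]) (use True in blast)+
    next
      case False
      then obtain k2 u2 as2 where t2: "(k2, (u2, as2, [])) \<in> set P0" by blast
      show ?thesis by (rule reduce_degree_zero[OF fa IH0 pm pe props(1) props(2) Bn Bc0 loc t1 t2]) blast+
    qed
  qed
qed

end

fun gen_nm :: "('v,'e) gen \<Rightarrow> ('v,'e) nmono" where
  "gen_nm (V x) = (x, [], [])" | "gen_nm (Ed e) = (r e, [e], [])" | "gen_nm (Gh e) = (r e, [], [e])"

lemma word_normal_form: "w \<noteq> [] \<Longrightarrow> set w \<subseteq> Gen \<Longrightarrow>
  \<exists>P. valid_poly P \<and> hom_poly (wdeg w) P \<and> congK (wmono w) (eval_poly P :: _ \<Rightarrow> 'k::field)"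
proof (induction w)
  case Nil then show ?case by simp
next
  case (Cons g w)
  show ?case
  proof (cases "w = []")
    case True
    have "valid_poly [((1::'k), gen_nm g)]" using Cons.prems by (cases g) (auto simp: valid_poly_def nm_valid.simps)
    moreover have "hom_poly (wdeg [g]) [((1::'k), gen_nm g)]" by (cases g) (auto simp: hom_poly_def nm_deg_def wdeg_def)
    moreover have "eval_poly [((1::'k), gen_nm g)] = wmono [g]" by (cases g) (auto simp: eval_poly_def)
    ultimately show ?thesis using True by (intro exI[of _ "[((1::'k), gen_nm g)]"]) auto
  next
    case False
    then obtain P where P: "valid_poly P" "hom_poly (wdeg w) P" "congK (wmono w) (eval_poly P :: _ \<Rightarrow> 'k)" using Cons by auto
    have g: "g \<in> Gen" using Cons.prems by auto
    have "congK (wmono (g # w)) (lmul [g] (eval_poly P) :: _ \<Rightarrow> 'k)"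
      using congK_lmul[OF P(3), of "[g]"] g by (simp add: lmul_wmono)
    also have "congK (lmul [g] (eval_poly P)) (eval_poly (lift_terms (act_l g) P))" by (rule eval_poly_lift_terms_congK_L[OF P(1) g])
    finally have "congK (wmono (g # w)) (eval_poly (lift_terms (act_l g) P))" .
    moreover have "valid_poly (lift_terms (act_l g) P)" by (rule valid_poly_act_l[OF P(1) g])
    moreover have "hom_poly (wdeg (g # w)) (lift_terms (act_l g) P)"
      using hom_poly_act_l[OF P(2), of g] by (simp add: wdeg_def add.commute)
    ultimately show ?thesis by blast
  qed
qed

lemma elem_normal_form: "finite A \<Longrightarrow> (\<And>w. w \<in> A \<Longrightarrow> w \<noteq> [] \<and> set w \<subseteq> Gen \<and> wdeg w = n) \<Longrightarrow>
  \<exists>P. valid_poly P \<and> hom_poly n P \<and> congK (sum (\<lambda>w. smul (c w) (wmono w)) A) (eval_poly P :: _ \<Rightarrow> 'k::field)"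
proof (induction A rule: finite_induct)
  case empty
  then show ?case by (intro exI[of _ "[]"]) (auto simp: valid_poly_def hom_poly_def)
next
  case (insert x A)
  then obtain P where P: "valid_poly P" "hom_poly n P" "congK (sum (\<lambda>w. smul (c w) (wmono w)) A) (eval_poly P :: _ \<Rightarrow> 'k)" by auto
  obtain Q where Q: "valid_poly Q" "hom_poly (wdeg x) Q" "congK (wmono x) (eval_poly Q :: _ \<Rightarrow> 'k)"
    using word_normal_form insert.prems by blast
  define Q' where "Q' = map (\<lambda>(k, t). (c x * k, t)) Q @ P"
  have "valid_poly Q'" using P(1) Q(1) unfolding Q'_def valid_poly_def by auto
  moreover have "hom_poly n Q'" using P(2) Q(2) insert.prems unfolding Q'_def hom_poly_def by auto
  moreover have "congK (sum (\<lambda>w. smul (c w) (wmono w)) (insert x A)) (eval_poly Q')"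
    using insert.hyps congK_add[OF congK_smul[OF Q(3), of "c x"] P(3)]
    by (simp add: Q'_def eval_poly_append eval_poly_scale del: plus_fun_apply)
  ultimately show ?case by blast
qed

definition nm_lsrc :: "('v,'e) nmono \<Rightarrow> 'v" where "nm_lsrc t = (case t of (u, as, bs) \<Rightarrow> start as u)"
definition nm_rsrc :: "('v,'e) nmono \<Rightarrow> 'v" where "nm_rsrc t = (case t of (u, as, bs) \<Rightarrow> start bs u)"

lemma corner_lift_terms: "corner v w P = lift_terms (\<lambda>t. if v = nm_lsrc t \<and> w = nm_rsrc t then Some t else None) P"
  unfolding corner_def lift_terms_comp
  by (rule arg_cong[where f = "\<lambda>f. lift_terms f P"]) (auto simp: fun_eq_iff nm_lsrc_def nm_rsrc_def split: prod.splits)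

lemma nm_srcs_E0: "nm_valid t \<Longrightarrow> nm_lsrc t \<in> E0 \<and> nm_rsrc t \<in> E0"
proof (cases t)
  case (fields u as bs)
  assume v: "nm_valid t"
  then have "u \<in> E0" "set as \<subseteq> E1" "set bs \<subseteq> E1" using fields by (auto simp: nm_valid.simps)
  then show ?thesis using fields by (cases as; cases bs) (auto simp: nm_lsrc_def nm_rsrc_def)
qed

lemma poly_decomp_corners:
  assumes finA: "finite A" and A: "\<And>k t. (k, t) \<in> set P \<Longrightarrow> nm_lsrc t \<in> A \<and> nm_rsrc t \<in> A"
  shows "eval_poly P = (\<Sum>v\<in>A. \<Sum>w\<in>A. eval_poly (corner v w P))"
proof -
  have "sum (\<lambda>v. sum (\<lambda>w. eval_poly (corner v w P)) A) A
      = sum (\<lambda>v. sum (\<lambda>w. evalh (\<lambda>t. eval_opt (if v = nm_lsrc t \<and> w = nm_rsrc t then Some t else None)) P) A) A"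
    by (simp only: corner_lift_terms eval_poly_lift_terms)
  also have "\<dots> = sum (\<lambda>v. evalh (\<lambda>t. sum (\<lambda>w. eval_opt (if v = nm_lsrc t \<and> w = nm_rsrc t then Some t else None)) A) P) A"
    by (simp only: evalh_sum)
  also have "\<dots> = evalh (\<lambda>t. sum (\<lambda>v. sum (\<lambda>w. eval_opt (if v = nm_lsrc t \<and> w = nm_rsrc t then Some t else None)) A) A) P"
    by (simp only: evalh_sum)
  also have "\<dots> = evalh (\<lambda>t. wmono (nm_word t)) P"
  proof (rule evalh_cong)
    fix k t assume kt: "(k, t) \<in> set P"
    show "sum (\<lambda>v. sum (\<lambda>w. eval_opt (if v = nm_lsrc t \<and> w = nm_rsrc t then Some t else None)) A) A = wmono (nm_word t)"
      using A[OF kt] by (blast intro: sum_sum_delta[OF finA])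
  qed
  finally show ?thesis by (simp add: eval_poly_def)
qed

lemma homog_reduces:
  fixes a :: "('v,'e) gen list \<Rightarrow> 'k::field"
  assumes fe: "free_elem Gen a" and hg: "homog n a" and an: "a \<notin> Ker"
  shows "reduces a"
proof -
  have fa: "finite {w. a w \<noteq> 0}" "\<And>w. a w \<noteq> 0 \<Longrightarrow> set w \<subseteq> Gen"
    using fe unfolding free_elem_def by auto
  have supp: "\<And>w. w \<in> {w. a w \<noteq> 0} \<Longrightarrow> w \<noteq> [] \<and> set w \<subseteq> Gen \<and> wdeg w = n"
    using fe hg unfolding free_elem_def homog_def by blast
  obtain P where P: "valid_poly P" "hom_poly n P" "congK (sum (\<lambda>w. smul (a w) (wmono w)) {w. a w \<noteq> 0}) (eval_poly P :: _ \<Rightarrow> 'k)"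
    using elem_normal_form[OF fa(1) supp, of a] by blast
  have aeq: "sum (\<lambda>w. smul (a w) (wmono w)) {w. a w \<noteq> 0} = a" by (rule support_decomp[OF fa(1), symmetric])
  have aP: "congK a (eval_poly P)" using P(3) unfolding aeq .
  define A where "A = nm_lsrc ` snd ` set P \<union> nm_rsrc ` snd ` set P"
  have finA: "finite A" unfolding A_def by simp
  have AE: "A \<subseteq> E0"
  proof
    fix x assume "x \<in> A"
    then obtain y where y: "y \<in> set P" "x = nm_lsrc (snd y) \<or> x = nm_rsrc (snd y)" unfolding A_def by blast
    have "nm_valid (snd y)" using valid_poly_D[OF P(1), of "fst y" "snd y"] y(1) by simp
    then show "x \<in> E0" using y(2) nm_srcs_E0 by blast
  qed
  have dec: "eval_poly P = (\<Sum>v\<in>A. \<Sum>w\<in>A. eval_poly (corner v w P))"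
    by (rule poly_decomp_corners[OF finA]) (force simp: A_def)
  have "\<exists>v\<in>A. \<exists>w\<in>A. lmul [V v] (rmul a [V w]) \<notin> Ker"
  proof (rule ccontr)
    assume "\<not> (\<exists>v\<in>A. \<exists>w\<in>A. lmul [V v] (rmul a [V w]) \<notin> Ker)"
    then have all: "lmul [V v] (rmul a [V w]) \<in> Ker" if "v \<in> A" "w \<in> A" for v w using that by blast
    have "eval_poly (corner v w P) \<in> Ker" if vw: "v \<in> A" "w \<in> A" for v w
    proof -
      have vE: "v \<in> E0" "w \<in> E0" using vw AE by auto
      have "congK (eval_poly (corner v w P)) (lmul [V v] (rmul (eval_poly P) [V w]))" by (rule congK_sym[OF corner_congK[OF P(1) vE]])
      also have "congK (lmul [V v] (rmul (eval_poly P) [V w])) (lmul [V v] (rmul a [V w]))"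
        using vE by (intro congK_lmul congK_rmul congK_sym[OF aP]) auto
      finally show ?thesis using all[OF vw] congK_Ker by blast
    qed
    then have "eval_poly P \<in> Ker" unfolding dec using finA by (intro Ker_sum) auto
    then show False using congK_Ker[OF aP] an by blast
  qed
  then obtain v w where vw: "v \<in> A" "w \<in> A" and nI: "lmul [V v] (rmul a [V w]) \<notin> Ker" by blast
  have vE: "v \<in> E0" "w \<in> E0" using vw AE by auto
  have Beq: "sandwich a (Inl v) (Inl w) = lmul [V v] (rmul a [V w])"
    by (simp add: sandwich_words[OF fa] lmul_rmul)
  have Bc: "congK (sandwich a (Inl v) (Inl w)) (eval_poly (corner v w P))"
  proof -
    have "congK (lmul [V v] (rmul a [V w])) (lmul [V v] (rmul (eval_poly P) [V w]))"
      using vE by (intro congK_lmul congK_rmul aP) auto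
    also have "congK (lmul [V v] (rmul (eval_poly P) [V w])) (eval_poly (corner v w P))" by (rule corner_congK[OF P(1) vE])
    finally show ?thesis using Beq by simp
  qed
  note props = corner_props[OF P(1) P(2), where v = v and w = w]
  show ?thesis
    by (rule reduces_induct[OF fa order.refl _ _ props(1) props(2) _ Bc]) (use vE nI Beq in auto)
qed

lemma graded_ideal_contains_generator:
  fixes J :: "(('v, 'e) gen list \<Rightarrow> 'k::field) set"
  assumes J: "alg_ideal Gen J" and KerJ: "Ker \<subseteq> J" and JKer: "\<not> J \<subseteq> Ker"
    and graded: "\<And>a n. a \<in> J \<Longrightarrow> hcomp n a \<in> J"
  shows "(\<exists>u\<in>E0. wmono [V u] \<in> J) \<or> (\<exists>v\<in>Reg E0 E1 s - X. gap E1 s v \<in> J)"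
proof -
  have AJ: "J \<subseteq> {f. free_elem Gen f}" "\<And>a b. a \<in> J \<Longrightarrow> b \<in> J \<Longrightarrow> fadd a b \<in> J"
    "\<And>a k. a \<in> J \<Longrightarrow> smul k a \<in> J"
    "\<And>a x. a \<in> J \<Longrightarrow> free_elem Gen x \<Longrightarrow> fmul x a \<in> J \<and> fmul a x \<in> J"
    using J unfolding alg_ideal_def by blast+
  obtain a where aJ: "a \<in> J" and aKer: "a \<notin> Ker" using JKer by blast
  have fe: "free_elem Gen a" using AJ(1) aJ by blast
  have fa: "finite {w. a w \<noteq> 0}" using fe unfolding free_elem_def by blast
  have "\<exists>n\<in>wdeg ` {w. a w \<noteq> 0}. hcomp n a \<notin> Ker"
  proof (rule ccontr)
    assume "\<not> ?thesis"
    then have "sum (\<lambda>n. hcomp n a) (wdeg ` {w. a w \<noteq> 0}) \<in> Ker" using fa by (intro Ker_sum) auto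
    then show False using aKer hcomp_decomp[OF fa] by simp
  qed
  then obtain n where nKer: "hcomp n a \<notin> Ker" by blast
  have feh: "free_elem Gen (hcomp n a)"
    using fe unfolding free_elem_def hcomp_def by (auto intro: finite_subset[OF _ fa])
  have "homog n (hcomp n a)" unfolding homog_def hcomp_def by auto
  then have "reduces (hcomp n a)" using homog_reduces[OF feh _ nKer] by blast
  then obtain \<mu> \<eta> k where pm: "is_path E0 E1 r s \<mu>" and pe: "is_path E0 E1 r s \<eta>" and k: "k \<noteq> 0"
    and target: "(\<exists>u\<in>E0. fsub (fmul (fmul (pth_star \<mu>) (hcomp n a)) (pth \<eta>)) (smul k (wmono [V u])) \<in> Ker) \<or>
      (\<exists>v\<in>Reg E0 E1 s - X. fsub (fmul (fmul (pth_star \<mu>) (hcomp n a)) (pth \<eta>)) (smul k (gap E1 s v)) \<in> Ker)"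
    unfolding reduces_def Let_def by blast
  define b where "b = fmul (fmul (pth_star \<mu>) (hcomp n a)) (pth \<eta>)"
  have "free_elem Gen (pth_star \<mu>)" unfolding pth_star_ghost_word
    by (rule free_wmono) (use pm in \<open>cases \<mu>; auto\<close>, rule ghost_word_Gen[OF pm])
  moreover have "free_elem Gen (pth \<eta>)" unfolding pth_path_word
    by (rule free_wmono) (use pe in \<open>cases \<eta>; auto\<close>, rule path_word_Gen[OF pe])
  ultimately have bJ: "b \<in> J" unfolding b_def using AJ(4) graded[OF aJ] by blast
  have tJ: "t \<in> J" if "fsub b (smul k t) \<in> Ker" for t
  proof -
    have "fsub b (smul k t) \<in> J" using that KerJ by blast
    moreover have "fadd b (smul (-1) (fsub b (smul k t))) = smul k t"
      by (auto simp: fun_eq_iff fadd_def smul_def fsub_def)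
    ultimately have "smul k t \<in> J" using AJ(2)[OF bJ AJ(3)] by metis
    then have "smul (inverse k) (smul k t) \<in> J" using AJ(3) by blast
    then show ?thesis using k by (simp add: smul_smul)
  qed
  show ?thesis using target tJ unfolding b_def by blast
qed

end

theorem mainTheorem3:
  fixes E0 :: "'v set" and E1 :: "'e set" and r s :: "'e \<Rightarrow> 'v" and X :: "'v set"
  assumes graph: "is_graph E0 E1 r s"
    and XReg: "X \<subseteq> Reg E0 E1 s"
  defines "Y \<equiv> Reg E0 E1 s - X"
    and "I \<equiv> (cohn_ideal E0 E1 r s X :: (('v, 'e) gen list \<Rightarrow> 'k::field) set)"
  shows
    "(\<forall>(a :: ('v, 'e) gen list \<Rightarrow> 'k) n.
        free_elem (gens E0 E1) a \<and> homog n a \<and> a \<notin> I \<longrightarrow>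
        (\<exists>\<mu> \<eta>. is_path E0 E1 r s \<mu> \<and> is_path E0 E1 r s \<eta> \<and>
           (let b = fmul (fmul (pth_star \<mu>) a) (pth \<eta>) in
              b \<notin> I \<and>
              (\<exists>k. k \<noteq> 0 \<and>
                 ((\<exists>u\<in>E0. fsub b (smul k (wmono [V u])) \<in> I) \<or>
                  (\<exists>v\<in>Y. fsub b (smul k (gap E1 s v)) \<in> I))))))
     \<and>
     (\<forall>J :: (('v, 'e) gen list \<Rightarrow> 'k) set.
        alg_ideal (gens E0 E1) J \<and> I \<subseteq> J \<and> \<not> J \<subseteq> I \<and>
        (\<forall>a\<in>J. \<forall>n. hcomp n a \<in> J) \<longrightarrow>
        (\<exists>u\<in>E0. wmono [V u] \<in> J) \<or> (\<exists>v\<in>Y. gap E1 s v \<in> J))"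
proof -
  interpret cohn_graph E0 E1 r s X by (rule cohn_graph.intro[OF graph XReg])
  have I: "I = Ker" unfolding I_def Ker_def ..
  have "\<forall>a n. free_elem Gen a \<and> homog n a \<and> a \<notin> Ker \<longrightarrow> reduces a"
    using homog_reduces by blast
  moreover have "\<forall>J. alg_ideal Gen J \<and> Ker \<subseteq> J \<and> \<not> J \<subseteq> Ker \<and> (\<forall>a\<in>J. \<forall>n. hcomp n a \<in> J) \<longrightarrow>
      (\<exists>u\<in>E0. wmono [V u] \<in> J) \<or> (\<exists>v\<in>Reg E0 E1 s - X. gap E1 s v \<in> J)"
    using graded_ideal_contains_generator by blast
  ultimately show ?thesis
    unfolding I Y_def reduces_def by (rule conjI)
qed

end
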